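(* Assume $(A)$, $(H_1)$, $(\Sigma)$ and fix $x\in\mathbb{R}^d$. Then, $\mathbb{P}$-a.s., $$\mathcal{K}(\underline{\lim}\,h(\cdot,\varphi))\le\underline{\lim}\,\varphi\le\overline{\lim}\,\varphi\le\mathcal{K}(\overline{\lim}\,h(\cdot,\varphi)).$$
   Context: Setting: canonical two-sided Wiener space $(\Omega,\mathcal{F},\mathbb{P})$ with $\Omega=C_0(\mathbb{R},\mathbb{R}^m)$, $W_t(\omega)=\omega(t)$, Wiener shift $\theta_t\omega(\cdot)=\omega(t+\cdot)-\omega(t)$; $T>0$ fixed. SDE on $\mathbb{R}^d$: $dX_t=[AX_t+h(t,X_t)]dt+\sigma(t)dW_t$, with $h(t+T,x)=h(t,x)$, $\sigma(t+T)=\sigma(t)$. $\Phi(t)=e^{tA}$. $\varphi(t,s,\omega)x$ ($s\le t$) denotes the continuous solution flow with $X(s)=x$, satisfying a.s. $\varphi(t,s,\omega)x=\Phi(t-s)x+\int_s^t\Phi(t-r)h(r,\varphi(r,s,\omega)x)dr+\int_s^t\Phi(t-r)\sigma(r)dW_r$. Order on $\mathbb{R}^d$: $x\le y$ iff $y-x\in\mathbb{R}^d_+$; $\inf$/$\sup$ componentwise. Norm $|x|=\max_i|x_i|$, $\|M\|=\max_{i,j}|M_{ij}|$. Assumptions: $(A)$: $a_{ij}\ge0$ for $i\ne j$, there is $\lambda<0$ with $\mathrm{Re}\,\mu\le\lambda$ for every eigenvalue $\mu$ of $A$, and $\|\Phi(t)\|\le e^{\lambda t}$ for $t\ge0$.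 $(H_1)$: $h\in C^1_b(\mathbb{R}\times\mathbb{R}^d,\mathbb{R}^d_+)$, and $h$ is either order-preserving or anti-order-preserving in $x$ for each $t$. $(\Sigma)$: $\sigma_{ij}$ continuous and $\sup_t\max_{i,j}|\sigma_{ij}(t)|<\infty$. Definitions: $a_n^h(t,\omega)=\inf\{h(t,\varphi(t,-mT,\omega)x):m\ge n\}$, $b_n^h(t,\omega)=\sup\{h(t,\varphi(t,-mT,\omega)x):m\ge n\}$ ($m,n\in\mathbb{N}_+$); $[\underline{\lim}\,\varphi](t,\omega)=\lim_{n\to\infty}\inf\{\varphi(t,-mT,\omega)x:m\ge n\}$, $[\overline{\lim}\,\varphi](t,\omega)=\lim_{n\to\infty}\sup\{\varphi(t,-mT,\omega)x:m\ge n\}$, $[\underline{\lim}\,h(\cdot,\varphi)](t,\omega)=\lim_n a_n^h(t,\omega)$, $[\overline{\lim}\,h(\cdot,\varphi)](t,\omega)=\lim_n b_n^h(t,\omega)$. Input-to-state characteristic operator: for a bounded measurable $u:\mathbb{R}\times\Omega\to\mathbb{R}^d_+$, $$[\mathcal{K}(u)](t,\omega)=\int_{-\infty}^t\Phi(t-s)u(s,\omega)\,ds+\int_{-\infty}^t\Phi(t-s)\sigma(s)\,dW_s .$$ *)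

theory Defs
  imports "HOL-Analysis.Analysis" "HOL-Probability.Probability"
begin

primrec mpow :: "real^'n^'n \<Rightarrow> nat \<Rightarrow> real^'n^'n" where
  "mpow A 0 = mat 1"
| "mpow A (Suc k) = A ** mpow A k"

text \<open>Matrix exponential e^A as its power series; Phi(t) = mexp (t *R A).\<close>
definition mexp :: "real^'n^'n \<Rightarrow> real^'n^'n" where
  "mexp A = (\<Sum>k. (1 / fact k :: real) *\<^sub>R mpow A k)"

definition mnorm :: "real^'m^'n \<Rightarrow> real" where
  "mnorm M = Max {\<bar>M $ i $ j\<bar> | i j. True}"

definition cmat :: "real^'n^'n \<Rightarrow> complex^'n^'n" where
  "cmat A = (\<chi> i j. complex_of_real (A $ i $ j))"

definition is_eigenvalue :: "real^'n^'n \<Rightarrow> complex \<Rightarrow> bool" where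
  "is_eigenvalue A \<mu> \<longleftrightarrow> det (mat \<mu> - cmat A) = 0"

definition assumption_A :: "real^'n^'n \<Rightarrow> bool" where
  "assumption_A A \<longleftrightarrow>
     (\<forall>i j. i \<noteq> j \<longrightarrow> A $ i $ j \<ge> 0) \<and>
     (\<exists>lam::real. lam < 0 \<and> (\<forall>\<mu>. is_eigenvalue A \<mu> \<longrightarrow> Re \<mu> \<le> lam) \<and>
        (\<forall>t\<ge>0. mnorm (mexp (t *\<^sub>R A)) \<le> exp (lam * t)))"

definition assumption_H1 :: "(real \<Rightarrow> real^'d \<Rightarrow> real^'d) \<Rightarrow> bool" where
  "assumption_H1 h \<longleftrightarrow>
     (\<exists>D :: real \<times> (real^'d) \<Rightarrow> (real \<times> (real^'d)) \<Rightarrow>\<^sub>L (real^'d).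
        (\<forall>z. ((\<lambda>(t, y). h t y) has_derivative blinfun_apply (D z)) (at z)) \<and>
        continuous_on UNIV D \<and> bounded (range D)) \<and>
     bounded (range (\<lambda>(t, y). h t y)) \<and>
     (\<forall>t y. 0 \<le> h t y) \<and>
     (\<forall>t. (\<forall>y z. y \<le> z \<longrightarrow> h t y \<le> h t z) \<or> (\<forall>y z. y \<le> z \<longrightarrow> h t z \<le> h t y))"

definition assumption_Sigma :: "(real \<Rightarrow> real^'m^'d) \<Rightarrow> bool" where
  "assumption_Sigma \<sigma> \<longleftrightarrow>
     (\<forall>i j. continuous_on UNIV (\<lambda>t. \<sigma> t $ i $ j)) \<and>
     (\<exists>C. \<forall>t i j. \<bar>\<sigma> t $ i $ j\<bar> \<le> C)"

definition two_sided_BM :: "'a measure \<Rightarrow> (real \<Rightarrow> 'a \<Rightarrow> real^'m) \<Rightarrow> bool" where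
  "two_sided_BM M W \<longleftrightarrow>
     prob_space M \<and>
     (\<forall>t. W t \<in> borel_measurable M) \<and>
     (\<forall>\<omega>\<in>space M. W 0 \<omega> = 0 \<and> continuous_on UNIV (\<lambda>t. W t \<omega>)) \<and>
     (\<forall>s t j. s < t \<longrightarrow>
        distributed M lborel (\<lambda>\<omega>. W t \<omega> $ j - W s \<omega> $ j) (normal_density 0 (sqrt (t - s)))) \<and>
     (\<forall>(n::nat) (\<tau>::nat \<Rightarrow> real). (\<forall>k<n. \<tau> k < \<tau> (Suc k)) \<longrightarrow>
        prob_space.indep_vars M (\<lambda>_. borel)
          (\<lambda>(k, j) \<omega>. W (\<tau> (Suc k)) \<omega> $ j - W (\<tau> k) \<omega> $ j) ({..<n} \<times> UNIV))"

definition riemann_ito_sum ::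
  "(real \<Rightarrow> 'a \<Rightarrow> real^'m) \<Rightarrow> (real \<Rightarrow> real^'m^'d) \<Rightarrow> real \<Rightarrow> real \<Rightarrow> nat \<Rightarrow> 'a \<Rightarrow> real^'d" where
  "riemann_ito_sum W f s t n \<omega> =
     (\<Sum>k<n. f (s + real k * (t - s) / real n) *v
        (W (s + real (Suc k) * (t - s) / real n) \<omega> - W (s + real k * (t - s) / real n) \<omega>))"

text \<open>I is (a version of) the Wiener integral int_s^t f(r) dW_r: the limit in probability
  of the Riemann sums (equivalently the L^2-limit, for continuous deterministic f).\<close>
definition wiener_integral ::
  "'a measure \<Rightarrow> (real \<Rightarrow> 'a \<Rightarrow> real^'m) \<Rightarrow> (real \<Rightarrow> real^'m^'d) \<Rightarrow> real \<Rightarrow> real \<Rightarrow> ('a \<Rightarrow> real^'d) \<Rightarrow> bool" where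
  "wiener_integral M W f s t I \<longleftrightarrow>
     I \<in> borel_measurable M \<and>
     (\<forall>\<epsilon>>0. (\<lambda>n. measure M {\<omega>\<in>space M. \<epsilon> < norm (riemann_ito_sum W f s t n \<omega> - I \<omega>)})
               \<longlonglongrightarrow> 0)"

definition wiener_integral_inf ::
  "'a measure \<Rightarrow> (real \<Rightarrow> 'a \<Rightarrow> real^'m) \<Rightarrow> (real \<Rightarrow> real^'m^'d) \<Rightarrow> real \<Rightarrow> ('a \<Rightarrow> real^'d) \<Rightarrow> bool" where
  "wiener_integral_inf M W f t Z \<longleftrightarrow>
     Z \<in> borel_measurable M \<and>
     (\<exists>I. (\<forall>s\<le>t. wiener_integral M W f s t (I s)) \<and>
          (\<forall>\<epsilon>>0. ((\<lambda>s. measure M {\<omega>\<in>space M. \<epsilon> < norm (I s \<omega> - Z \<omega>)}) \<longlongrightarrow> 0) at_bot))"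

text \<open>phi(t,s,omega)x (s <= t) is the continuous solution flow of
  dX = [AX + h(t,X)]dt + sigma(t)dW, X(s) = x: continuous in t on [s,infinity),
  measurable in omega, and a.s. satisfying the variation-of-constants formula.\<close>
definition solution_flow ::
  "'a measure \<Rightarrow> (real \<Rightarrow> 'a \<Rightarrow> real^'m) \<Rightarrow> real^'d^'d \<Rightarrow> (real \<Rightarrow> real^'d \<Rightarrow> real^'d) \<Rightarrow>
   (real \<Rightarrow> real^'m^'d) \<Rightarrow> (real \<Rightarrow> real \<Rightarrow> 'a \<Rightarrow> real^'d \<Rightarrow> real^'d) \<Rightarrow> bool" where
  "solution_flow M W A h \<sigma> \<phi> \<longleftrightarrow>
     (\<forall>s y. \<forall>\<omega>\<in>space M. continuous_on {s..} (\<lambda>t. \<phi> t s \<omega> y)) \<and>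
     (\<forall>t s y. (\<lambda>\<omega>. \<phi> t s \<omega> y) \<in> borel_measurable M) \<and>
     (\<forall>s t y. s \<le> t \<longrightarrow>
        (\<exists>I. wiener_integral M W (\<lambda>r. mexp ((t - r) *\<^sub>R A) ** \<sigma> r) s t I \<and>
             (AE \<omega> in M. \<phi> t s \<omega> y =
                mexp ((t - s) *\<^sub>R A) *v y
                + integral {s..t} (\<lambda>r. mexp ((t - r) *\<^sub>R A) *v h r (\<phi> r s \<omega> y))
                + I \<omega>)))"

text \<open>Componentwise lower and upper limits lim_n inf/sup {phi(t,-mT,omega)x : m >= n}
  (extended-real valued, so no boundedness is presupposed).\<close>
definition liminf_phi ::
  "(real \<Rightarrow> real \<Rightarrow> 'a \<Rightarrow> real^'d \<Rightarrow> real^'d) \<Rightarrow> real \<Rightarrow> real^'d \<Rightarrow> real \<Rightarrow> 'a \<Rightarrow> 'd \<Rightarrow> ereal" where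
  "liminf_phi \<phi> T y t \<omega> i = liminf (\<lambda>m::nat. ereal (\<phi> t (- (real m * T)) \<omega> y $ i))"

definition limsup_phi ::
  "(real \<Rightarrow> real \<Rightarrow> 'a \<Rightarrow> real^'d \<Rightarrow> real^'d) \<Rightarrow> real \<Rightarrow> real^'d \<Rightarrow> real \<Rightarrow> 'a \<Rightarrow> 'd \<Rightarrow> ereal" where
  "limsup_phi \<phi> T y t \<omega> i = limsup (\<lambda>m::nat. ereal (\<phi> t (- (real m * T)) \<omega> y $ i))"

text \<open>[liminf h(.,phi)](t,omega) = lim_n a_n^h(t,omega) and [limsup h(.,phi)](t,omega) = lim_n b_n^h(t,omega)
  (finite, since h is bounded).\<close>
definition liminf_h ::
  "(real \<Rightarrow> real^'d \<Rightarrow> real^'d) \<Rightarrow> (real \<Rightarrow> real \<Rightarrow> 'a \<Rightarrow> real^'d \<Rightarrow> real^'d) \<Rightarrow> real \<Rightarrow> real^'d \<Rightarrow> real \<Rightarrow> 'a \<Rightarrow> real^'d" where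
  "liminf_h h \<phi> T y t \<omega> =
     (\<chi> i. real_of_ereal (liminf (\<lambda>m::nat. ereal (h t (\<phi> t (- (real m * T)) \<omega> y) $ i))))"

definition limsup_h ::
  "(real \<Rightarrow> real^'d \<Rightarrow> real^'d) \<Rightarrow> (real \<Rightarrow> real \<Rightarrow> 'a \<Rightarrow> real^'d \<Rightarrow> real^'d) \<Rightarrow> real \<Rightarrow> real^'d \<Rightarrow> real \<Rightarrow> 'a \<Rightarrow> real^'d" where
  "limsup_h h \<phi> T y t \<omega> =
     (\<chi> i. real_of_ereal (limsup (\<lambda>m::nat. ereal (h t (\<phi> t (- (real m * T)) \<omega> y) $ i))))"

text \<open>Input-to-state characteristic operator:
  [K(u)](t,omega) = int_{-infinity}^t Phi(t-s) u(s,omega) ds + Z(omega), where Z is (a version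
  of) the improper Wiener integral int_{-infinity}^t Phi(t-s) sigma(s) dW_s.\<close>
definition K_op ::
  "real^'d^'d \<Rightarrow> (real \<Rightarrow> 'a \<Rightarrow> real^'d) \<Rightarrow> ('a \<Rightarrow> real^'d) \<Rightarrow> real \<Rightarrow> 'a \<Rightarrow> real^'d" where
  "K_op A u Z t \<omega> = (LINT s:{..t}|lborel. mexp ((t - s) *\<^sub>R A) *v u s \<omega>) + Z \<omega>"

end

theory Submission
  imports Defs "HOL-Real_Asymp.Real_Asymp"
begin

(* By variation of constants,
     phi(t,-mT)x = Phi(t+mT)x + int_{-mT}^t Phi(t-r) h(r, phi(r,-mT)x) dr + int_{-mT}^t Phi(t-r) sigma(r) dW_r.
   The first term tends to 0 because Phi decays like exp(lam s) with lam < 0. The Wiener integrals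
   converge to int_{-infinity}^t Phi(t-r) sigma(r) dW_r almost surely: by the Ito isometry the m-th one
   is further than exp(lam (t+mT)/2) from the limit with probability O(exp(lam (t+mT))), which is
   summable, so Borel-Cantelli applies. Finally A is a Metzler matrix, so Phi(s) is entrywise
   nonnegative for s >= 0, and Fatou's lemma (in its reverse form, with an integrable majorant
   C exp(lam (t-r)), for the upper limit) bounds the lower and upper limits of the drift integrals by
   the integrals of the lower and upper limits of h along the pullback trajectories. *)

section \<open>The matrix exponential\<close>

lemma abs_entry_le_mnorm: "\<bar>M $ i $ j\<bar> \<le> mnorm (M::real^'m^'n)"
proof -
  have "{\<bar>M $ i $ j\<bar> | i j. True} = (\<lambda>(i, j). \<bar>M $ i $ j\<bar>) ` UNIV" by auto
  then have "finite {\<bar>M $ i $ j\<bar> | i j. True}" by simp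
  then show ?thesis unfolding mnorm_def by (rule Max_ge) blast
qed

lemma mnorm_nonneg: "0 \<le> mnorm (M::real^'m^'n)"
  using abs_entry_le_mnorm[of M] abs_ge_zero order_trans by blast

lemma abs_mpow_entry_le: "\<bar>mpow (A::real^'n^'n) k $ i $ j\<bar> \<le> (real CARD('n) * mnorm A) ^ k"
proof (induction k arbitrary: i j)
  case 0
  then show ?case by (simp add: mat_def)
next
  case (Suc k)
  have "\<bar>mpow A (Suc k) $ i $ j\<bar> = \<bar>\<Sum>l\<in>UNIV. A $ i $ l * mpow A k $ l $ j\<bar>"
    by (simp add: matrix_matrix_mult_def)
  also have "\<dots> \<le> (\<Sum>l\<in>UNIV. \<bar>A $ i $ l * mpow A k $ l $ j\<bar>)" by (rule sum_abs)
  also have "\<dots> \<le> (\<Sum>l\<in>(UNIV::'n set). mnorm A * (real CARD('n) * mnorm A) ^ k)"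
    by (rule sum_mono) (auto simp: abs_mult intro!: mult_mono abs_entry_le_mnorm mnorm_nonneg Suc)
  finally show ?case by (simp add: algebra_simps)
qed

lemma summable_abs_mpow_entry: "summable (\<lambda>k. \<bar>mpow (A::real^'n^'n) k $ i $ j / fact k\<bar>)"
proof (rule summable_comparison_test)
  let ?q = "real CARD('n) * mnorm A"
  show "summable (\<lambda>k. inverse (fact k) * ?q ^ k)" by (rule summable_exp)
  have "inverse (fact k) * \<bar>mpow A k $ i $ j\<bar> \<le> inverse (fact k) * ?q ^ k" for k
    by (intro mult_left_mono abs_mpow_entry_le) simp
  then show "\<exists>N. \<forall>k\<ge>N. norm \<bar>mpow A k $ i $ j / fact k\<bar> \<le> inverse (fact k) * ?q ^ k"
    by (simp add: divide_inverse abs_mult mult.commute)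
qed

lemma summable_mexp_series: "summable (\<lambda>k. (1 / fact k :: real) *\<^sub>R mpow (A::real^'n^'n) k)"
proof (rule summable_comparison_test)
  let ?q = "real CARD('n) * mnorm A"
  show "summable (\<lambda>k. real CARD('n) * real CARD('n) * (?q ^ k / fact k))"
    using summable_exp[of ?q] by (intro summable_mult) (simp add: divide_inverse mult.commute)
  have "norm ((1 / fact k :: real) *\<^sub>R mpow A k) \<le> real CARD('n) * real CARD('n) * (?q ^ k / fact k)" for k
  proof -
    have "norm ((1 / fact k :: real) *\<^sub>R mpow A k)
        \<le> (\<Sum>i\<in>UNIV. norm (((1 / fact k :: real) *\<^sub>R mpow A k) $ i))"
      unfolding norm_vec_def by (rule L2_set_le_sum) simp
    also have "\<dots> \<le> (\<Sum>i\<in>UNIV. \<Sum>j\<in>UNIV. \<bar>((1 / fact k :: real) *\<^sub>R mpow A k) $ i $ j\<bar>)"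
      by (rule sum_mono) (metis norm_le_l1_cart real_norm_def)
    also have "\<dots> \<le> (\<Sum>i\<in>(UNIV::'n set). \<Sum>j\<in>(UNIV::'n set). ?q ^ k / fact k)"
      by (intro sum_mono) (auto simp: abs_mult divide_right_mono abs_mpow_entry_le)
    finally show ?thesis by simp
  qed
  then show "\<exists>N. \<forall>k\<ge>N. norm ((1 / fact k :: real) *\<^sub>R mpow A k) \<le> real CARD('n) * real CARD('n) * (?q ^ k / fact k)"
    by blast
qed

lemma mexp_entry: "mexp (A::real^'n^'n) $ i $ j = (\<Sum>k. mpow A k $ i $ j / fact k)"
proof -
  have "(\<lambda>k. ((1 / fact k :: real) *\<^sub>R mpow A k) $ i $ j) sums (mexp A $ i $ j)"
    unfolding mexp_def by (intro sums_vec_nth summable_sums summable_mexp_series)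
  then show ?thesis by (simp add: sums_iff)
qed

lemma mpow_scaleR: "mpow (c *\<^sub>R (A::real^'n^'n)) k = c ^ k *\<^sub>R mpow A k"
  by (induction k) (simp_all add: scalar_matrix_assoc matrix_scalar_ac mult.commute)

lemma continuous_mexp_scaleR_entry: "isCont (\<lambda>t. mexp (t *\<^sub>R (A::real^'n^'n)) $ i $ j) t"
proof -
  have "isCont (\<lambda>t. \<Sum>k. (mpow A k $ i $ j / fact k) * t ^ k) t"
  proof (rule isCont_powser_converges_everywhere)
    fix y :: real
    show "summable (\<lambda>k. (mpow A k $ i $ j / fact k) * y ^ k)"
      using summable_rabs_cancel[OF summable_abs_mpow_entry[of "y *\<^sub>R A" i j]]
      by (simp add: mpow_scaleR mult.commute)
  qed
  then show ?thesis by (simp add: mexp_entry mpow_scaleR mult.commute)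
qed

lemma continuous_on_mexp_scaleR: "continuous_on S (\<lambda>t. mexp (t *\<^sub>R (A::real^'n^'n)))"
proof -
  have "continuous_on S (\<lambda>t. mexp (t *\<^sub>R A) $ i)" for i
    by (rule continuous_on_vec_lambda[where f="\<lambda>j t. mexp (t *\<^sub>R A) $ i $ j", simplified])
       (simp add: continuous_at_imp_continuous_on continuous_mexp_scaleR_entry)
  then show ?thesis
    by (rule continuous_on_vec_lambda[where f="\<lambda>i t. mexp (t *\<^sub>R A) $ i", simplified])
qed

lemma continuous_on_mexp_backward: "continuous_on S (\<lambda>r. mexp ((t - r) *\<^sub>R (A::real^'n^'n)))"
  by (rule continuous_on_compose2[OF continuous_on_mexp_scaleR[of UNIV]]) (auto intro!: continuous_intros)

lemma mpow_add_scaled_identity: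
  fixes B :: "real^'n^'n"
  shows "mpow (B + c *\<^sub>R mat 1) k = (\<Sum>l\<le>k. (real (k choose l) * c ^ (k - l)) *\<^sub>R mpow B l)"
proof (induction k)
  case 0
  then show ?case by simp
next
  case (Suc k)
  define \<beta> where "\<beta> k l = real (k choose l) * c ^ (k - l)" for k l
  have pascal: "\<beta> k l + c * \<beta> k (Suc l) = \<beta> (Suc k) (Suc l)" if "l \<le> k" for l
  proof (cases "l = k")
    case False
    then have "c * c ^ (k - Suc l) = c ^ (k - l)" using that
      by (metis Suc_diff_Suc le_neq_implies_less power_Suc)
    then show ?thesis by (simp add: \<beta>_def algebra_simps)
  qed (simp add: \<beta>_def)
  have left_mult_sum: "B ** (\<Sum>l\<le>k. a l *\<^sub>R M l) = (\<Sum>l\<le>k. a l *\<^sub>R (B ** M l))"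
    for a and M :: "nat \<Rightarrow> real^'n^'n"
    by (induction k) (simp_all add: matrix_add_ldistrib matrix_scalar_ac scalar_matrix_assoc[symmetric])
  have "(B + C) ** N = B ** N + C ** N" for C N :: "real^'n^'n"
    by (simp add: matrix_matrix_mult_def vec_eq_iff algebra_simps sum.distrib)
  then have "(B + c *\<^sub>R mat 1) ** N = B ** N + c *\<^sub>R N" for N :: "real^'n^'n"
    by (simp add: scalar_matrix_assoc[symmetric])
  then have distrib: "(B + c *\<^sub>R mat 1) ** (\<Sum>l\<le>k. \<beta> k l *\<^sub>R mpow B l)
      = (\<Sum>l\<le>k. \<beta> k l *\<^sub>R mpow B (Suc l)) + (\<Sum>l\<le>k. (c * \<beta> k l) *\<^sub>R mpow B l)"
    by (simp add: left_mult_sum scaleR_sum_right)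
  have "(\<Sum>l\<le>k. (c * \<beta> k l) *\<^sub>R mpow B l)
      = (c * \<beta> k 0) *\<^sub>R mpow B 0 + (\<Sum>l\<le>k. (c * \<beta> k (Suc l)) *\<^sub>R mpow B (Suc l))"
    by (subst sum.atMost_Suc_shift[symmetric]) (simp add: \<beta>_def)
  moreover have "(\<Sum>l\<le>Suc k. \<beta> (Suc k) l *\<^sub>R mpow B l)
      = \<beta> (Suc k) 0 *\<^sub>R mpow B 0 + (\<Sum>l\<le>k. (\<beta> k l + c * \<beta> k (Suc l)) *\<^sub>R mpow B (Suc l))"
    by (subst sum.atMost_Suc_shift) (simp add: pascal)
  moreover have "\<beta> (Suc k) 0 = c * \<beta> k 0" by (simp add: \<beta>_def)
  ultimately show ?case
    using Suc by (simp add: \<beta>_def[symmetric] distrib scaleR_add_left sum.distrib algebra_simps)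
qed

lemma mexp_add_scaled_identity: "mexp (B + c *\<^sub>R mat 1) = exp c *\<^sub>R mexp (B::real^'n^'n)"
proof -
  have "mexp (B + c *\<^sub>R mat 1) $ i $ j = exp c * mexp B $ i $ j" for i j
  proof -
    define a where "a l = mpow B l $ i $ j / fact l" for l
    define b where "b p = c ^ p / fact p" for p
    have Cauchy_entry: "mpow (B + c *\<^sub>R mat 1) k $ i $ j / fact k = (\<Sum>l\<le>k. a l * b (k - l))" for k
    proof -
      have "mpow (B + c *\<^sub>R mat 1) k $ i $ j / fact k
          = (\<Sum>l\<le>k. real (k choose l) * c ^ (k - l) * mpow B l $ i $ j / fact k)"
        by (simp add: mpow_add_scaled_identity sum_component sum_divide_distrib)
      also have "\<dots> = (\<Sum>l\<le>k. a l * b (k - l))"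
      proof (rule sum.cong)
        fix l assume l: "l \<in> {..k}"
        then have "(fact k :: real) = fact l * fact (k - l) * real (k choose l)"
          by (metis binomial_fact_lemma atMost_iff of_nat_fact of_nat_mult)
        then show "real (k choose l) * c ^ (k - l) * mpow B l $ i $ j / fact k = a l * b (k - l)"
          using l by (simp add: a_def b_def field_simps)
      qed simp
      finally show ?thesis .
    qed
    have "summable (\<lambda>k. norm (a k))" unfolding a_def using summable_abs_mpow_entry by simp
    moreover have "summable (\<lambda>k. norm (b k))"
      unfolding b_def using summable_exp[of "\<bar>c\<bar>"] by (simp add: abs_mult power_abs divide_inverse mult.commute)
    ultimately have "mexp (B + c *\<^sub>R mat 1) $ i $ j = (\<Sum>k. a k) * (\<Sum>k. b k)"
      by (simp add: mexp_entry Cauchy_entry Cauchy_product)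
    moreover have "(\<Sum>k. b k) = exp c" unfolding b_def exp_def by (simp add: divide_inverse mult.commute)
    ultimately show ?thesis by (simp add: mexp_entry a_def)
  qed
  then show ?thesis by (simp add: vec_eq_iff)
qed

lemma mexp_nonneg_if_nonneg:
  assumes "\<And>i j. 0 \<le> (B::real^'n^'n) $ i $ j"
  shows "0 \<le> mexp B $ i $ j"
proof -
  have "0 \<le> mpow B k $ i $ j" for k i j
    by (induction k arbitrary: i j) (auto simp: mat_def matrix_matrix_mult_def assms intro!: sum_nonneg)
  then show ?thesis
    unfolding mexp_entry using summable_rabs_cancel[OF summable_abs_mpow_entry[of B i j]]
    by (intro suminf_nonneg) auto
qed

lemma mexp_nonneg_if_Metzler:
  assumes Metzler: "\<And>i j. i \<noteq> j \<Longrightarrow> 0 \<le> (A::real^'n^'n) $ i $ j"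
  shows "0 \<le> mexp A $ i $ j"
proof -
  define B where "B = A + mnorm A *\<^sub>R mat 1"
  have "0 \<le> B $ k $ l" for k l
    using Metzler[of k l] abs_entry_le_mnorm[of A k k] by (cases "k = l") (auto simp: B_def mat_def)
  then have "0 \<le> mexp B $ i $ j" by (rule mexp_nonneg_if_nonneg)
  moreover have "mexp A = exp (- mnorm A) *\<^sub>R mexp B"
    using mexp_add_scaled_identity[of B "- mnorm A"] by (simp add: B_def)
  ultimately show ?thesis by simp
qed

section \<open>An Ito isometry for Riemann sums\<close>

text \<open>Polarization: for Brownian motion this is the covariance of the increments over
  \<open>[a, b]\<close> and \<open>[c, d]\<close>.\<close>
definition increment_cov :: "real \<Rightarrow> real \<Rightarrow> real \<Rightarrow> real \<Rightarrow> real" where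
  "increment_cov a b c d = (\<bar>b - c\<bar> + \<bar>a - d\<bar> - \<bar>b - d\<bar> - \<bar>a - c\<bar>) / 2"

lemma increment_cov_eq_overlap:
  assumes "a \<le> b" "c \<le> d"
  shows "increment_cov a b c d = (LINT r|lborel. indicator {a..<b} r * indicator {c..<d} r)"
proof -
  have "(\<lambda>r. indicator {a..<b} r * indicator {c..<d} r :: real) = indicator {max a c..<min b d}"
    by (auto simp: indicator_def fun_eq_iff)
  then have "(LINT r|lborel. indicator {a..<b} r * indicator {c..<d} r) = measure lborel {max a c..<min b d}"
    by simp
  also have "\<dots> = max 0 (min b d - max a c)"
    by (cases "max a c \<le> min b d") auto
  also have "\<dots> = increment_cov a b c d"
    using assms unfolding increment_cov_def by (auto simp: abs_if max_def min_def)
  finally show ?thesis ..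
qed

lemma integral_step_sq:
  assumes "finite L" and "\<And>l. l \<in> L \<Longrightarrow> a l \<le> b l"
  shows "integrable lborel (\<lambda>r. (\<Sum>l\<in>L. c l * indicator {a l..<b l} r)\<^sup>2)"
    and "(LINT r|lborel. (\<Sum>l\<in>L. c l * indicator {a l..<b l} r)\<^sup>2)
       = (\<Sum>l\<in>L. \<Sum>l'\<in>L. c l * c l' * increment_cov (a l) (b l) (a l') (b l'))"
proof -
  let ?X = "\<lambda>l r. indicator {a l..<b l} r :: real"
  have sq: "(\<lambda>r. (\<Sum>l\<in>L. c l * ?X l r)\<^sup>2) = (\<lambda>r. \<Sum>l\<in>L. \<Sum>l'\<in>L. c l * c l' * (?X l r * ?X l' r))"
    by (simp add: fun_eq_iff power2_eq_square sum_product algebra_simps)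
  have "integrable lborel (\<lambda>r. ?X l r * ?X l' r)" for l l'
  proof -
    have "(\<lambda>r. ?X l r * ?X l' r) = indicator ({a l..<b l} \<inter> {a l'..<b l'})"
      by (auto simp: indicator_def fun_eq_iff)
    moreover have "emeasure lborel ({a l..<b l} \<inter> {a l'..<b l'}) < \<infinity>"
      by (rule le_less_trans[OF emeasure_mono[of _ "{a l..b l}"]]) (auto simp: emeasure_lborel_Icc_eq)
    ultimately show ?thesis by (simp add: integrable_indicator_iff)
  qed
  then show "integrable lborel (\<lambda>r. (\<Sum>l\<in>L. c l * ?X l r)\<^sup>2)" unfolding sq by simp
  show "(LINT r|lborel. (\<Sum>l\<in>L. c l * ?X l r)\<^sup>2)
       = (\<Sum>l\<in>L. \<Sum>l'\<in>L. c l * c l' * increment_cov (a l) (b l) (a l') (b l'))"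
    unfolding sq using \<open>integrable lborel (\<lambda>r. ?X _ r * ?X _ r)\<close> assms
    by (simp add: increment_cov_eq_overlap)
qed

context
  fixes M :: "'a measure" and W :: "real \<Rightarrow> 'a \<Rightarrow> real^'m"
  assumes BM: "two_sided_BM M W"
begin

lemma integral_increment_sq:
  "integrable M (\<lambda>\<omega>. (W u \<omega> $ j - W v \<omega> $ j)\<^sup>2) \<and> (LINT \<omega>|M. (W u \<omega> $ j - W v \<omega> $ j)\<^sup>2) = \<bar>u - v\<bar>"
proof -
  have pos: "integrable M (\<lambda>\<omega>. (W u \<omega> $ j - W v \<omega> $ j)\<^sup>2) \<and> (LINT \<omega>|M. (W u \<omega> $ j - W v \<omega> $ j)\<^sup>2) = u - v"
    if "v < u" for u v
  proof -
    have D: "distributed M lborel (\<lambda>\<omega>. W u \<omega> $ j - W v \<omega> $ j) (normal_density 0 (sqrt (u - v)))"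
      using BM that unfolding two_sided_BM_def by blast
    have "has_bochner_integral lborel (\<lambda>x. normal_density 0 (sqrt (u - v)) x * x\<^sup>2) ((2 * u - 2 * v) / 2)"
      using normal_moment_even[of "sqrt (u - v)" 0 1] that by (simp add: power2_eq_square)
    moreover have "(2 * u - 2 * v) / 2 = u - v" by simp
    ultimately have "has_bochner_integral lborel (\<lambda>x. normal_density 0 (sqrt (u - v)) x * x\<^sup>2) (u - v)"
      by metis
    then show ?thesis
      using distributed_integrable[OF D, of "\<lambda>x. x\<^sup>2"] distributed_integral[OF D, of "\<lambda>x. x\<^sup>2"]
      by (auto intro: integrable.intros simp: has_bochner_integral_integral_eq)
  qed
  show ?thesis
  proof (cases u v rule: linorder_cases)
    case less
    then show ?thesis using pos[OF less] by (simp add: power2_commute)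
  qed (use pos in auto)
qed

lemma integral_increment_product:
  "integrable M (\<lambda>\<omega>. (W b \<omega> $ j - W a \<omega> $ j) * (W d \<omega> $ j - W c \<omega> $ j)) \<and>
   (LINT \<omega>|M. (W b \<omega> $ j - W a \<omega> $ j) * (W d \<omega> $ j - W c \<omega> $ j)) = increment_cov a b c d"
proof -
  let ?D = "\<lambda>u v \<omega>. (W u \<omega> $ j - W v \<omega> $ j)\<^sup>2"
  have "(\<lambda>\<omega>. (W b \<omega> $ j - W a \<omega> $ j) * (W d \<omega> $ j - W c \<omega> $ j))
     = (\<lambda>\<omega>. (?D b c \<omega> + ?D a d \<omega> - ?D b d \<omega> - ?D a c \<omega>) / 2)"
    by (simp add: fun_eq_iff power2_eq_square algebra_simps)
  then show ?thesis
    using integral_increment_sq by (simp add: increment_cov_def)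
qed

lemma ito_isometry_step:
  assumes "finite L" and "\<And>l. l \<in> L \<Longrightarrow> a l \<le> b l"
  shows "integrable M (\<lambda>\<omega>. (\<Sum>l\<in>L. c l * (W (b l) \<omega> $ j - W (a l) \<omega> $ j))\<^sup>2)"
    and "(LINT \<omega>|M. (\<Sum>l\<in>L. c l * (W (b l) \<omega> $ j - W (a l) \<omega> $ j))\<^sup>2)
       = (LINT r|lborel. (\<Sum>l\<in>L. c l * indicator {a l..<b l} r)\<^sup>2)"
proof -
  let ?X = "\<lambda>l \<omega>. W (b l) \<omega> $ j - W (a l) \<omega> $ j"
  have sq: "(\<lambda>\<omega>. (\<Sum>l\<in>L. c l * ?X l \<omega>)\<^sup>2) = (\<lambda>\<omega>. \<Sum>l\<in>L. \<Sum>l'\<in>L. c l * c l' * (?X l \<omega> * ?X l' \<omega>))"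
    by (simp add: fun_eq_iff power2_eq_square sum_product algebra_simps)
  show "integrable M (\<lambda>\<omega>. (\<Sum>l\<in>L. c l * ?X l \<omega>)\<^sup>2)"
    unfolding sq using integral_increment_product by simp
  show "(LINT \<omega>|M. (\<Sum>l\<in>L. c l * ?X l \<omega>)\<^sup>2) = (LINT r|lborel. (\<Sum>l\<in>L. c l * indicator {a l..<b l} r)\<^sup>2)"
    unfolding sq using integral_step_sq(2)[OF assms, where c=c] integral_increment_product by simp
qed

end

definition grid :: "real \<Rightarrow> real \<Rightarrow> nat \<Rightarrow> nat \<Rightarrow> real" where
  "grid s t n k = s + real k * (t - s) / real n"

definition step_approx ::
  "(real \<Rightarrow> real^'m^'d) \<Rightarrow> real \<Rightarrow> real \<Rightarrow> nat \<Rightarrow> 'd \<Rightarrow> 'm \<Rightarrow> real \<Rightarrow> real" where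
  "step_approx f s t n i j r =
     (\<Sum>k<n. f (grid s t n k) $ i $ j * indicator {grid s t n k..<grid s t n (Suc k)} r)"

lemma grid_le_grid_Suc: "s \<le> t \<Longrightarrow> grid s t n k \<le> grid s t n (Suc k)"
  by (cases "n = 0") (simp_all add: grid_def divide_right_mono mult_right_mono)

lemma indicator_grid_cell:
  assumes "s < t" "0 < n"
  shows "indicator {grid s t n k..<grid s t n (Suc k)} r =
    (if real k \<le> (r - s) * n / (t - s) \<and> (r - s) * n / (t - s) < real k + 1 then 1 else (0::real))"
proof -
  let ?x = "(r - s) * n / (t - s)"
  define \<Delta> where "\<Delta> = (t - s) / n"
  have \<Delta>: "0 < \<Delta>" using assms by (simp add: \<Delta>_def)
  have x: "r - s = ?x * \<Delta>" using assms by (simp add: field_simps \<Delta>_def)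
  have grid: "grid s t n k = s + real k * \<Delta>" for k by (simp add: grid_def \<Delta>_def)
  have "grid s t n k \<le> r \<longleftrightarrow> real k * \<Delta> \<le> ?x * \<Delta>"
    unfolding grid using x by linarith
  also have "\<dots> \<longleftrightarrow> real k \<le> ?x" by (rule mult_le_cancel_right_pos[OF \<Delta>])
  finally have left: "grid s t n k \<le> r \<longleftrightarrow> real k \<le> ?x" .
  have "r < grid s t n (Suc k) \<longleftrightarrow> ?x * \<Delta> < (real k + 1) * \<Delta>"
    unfolding grid using x by (simp add: distrib_right) linarith
  also have "\<dots> \<longleftrightarrow> ?x < real k + 1" by (rule mult_less_cancel_right_pos[OF \<Delta>])
  finally have right: "r < grid s t n (Suc k) \<longleftrightarrow> ?x < real k + 1" .
  show ?thesis using left right by (auto simp: indicator_def)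
qed

lemma step_approx_eval:
  assumes st: "s < t" and n: "0 < n" and r: "s \<le> r" "r < t"
  obtains p where "s \<le> p" "p \<le> r" "r - p \<le> (t - s) / n" "step_approx f s t n i j r = f p $ i $ j"
proof -
  let ?x = "(r - s) * n / (t - s)"
  define k0 where "k0 = nat \<lfloor>?x\<rfloor>"
  have "0 \<le> ?x" using st r n by simp
  moreover have "?x < n" using st r n by (simp add: divide_less_eq)
  ultimately have k0: "real k0 \<le> ?x" "?x < real k0 + 1" "k0 < n" unfolding k0_def by linarith+
  have ind: "indicator {grid s t n k..<grid s t n (Suc k)} r = (if k = k0 then 1 else (0::real))" for k
    unfolding indicator_grid_cell[OF st n] using k0 by auto
  have "grid s t n k0 \<le> r" "r < grid s t n (Suc k0)"
    using ind[of k0] by (auto simp: indicator_def split: if_splits)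
  moreover have "grid s t n (Suc k0) = grid s t n k0 + (t - s) / n"
    by (simp add: grid_def distrib_right add_divide_distrib)
  moreover have "s \<le> grid s t n k0" using st n by (simp add: grid_def)
  moreover have "step_approx f s t n i j r = f (grid s t n k0) $ i $ j"
    unfolding step_approx_def ind using k0(3) by (simp add: if_distrib sum.delta cong: if_cong)
  ultimately show ?thesis using that by simp
qed

lemma step_approx_outside:
  assumes st: "s < t" and n: "0 < n" and r: "r < s \<or> t \<le> r"
  shows "step_approx f s t n i j r = 0"
proof -
  have "(r - s) * n / (t - s) < 0 \<or> real n \<le> (r - s) * n / (t - s)"
    using st n r by (auto simp: divide_less_0_iff le_divide_eq mult_neg_pos)
  then have "indicator {grid s t n k..<grid s t n (Suc k)} r = (0::real)" if "k < n" for k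
    unfolding indicator_grid_cell[OF st n] using that by auto
  then show ?thesis by (simp add: step_approx_def)
qed

lemma step_approx_diff_as_sum:
  "step_approx f u t n i j r - step_approx f s t n i j r = (\<Sum>l\<in>{..<n} <+> {..<n}.
      (case l of Inl k \<Rightarrow> f (grid u t n k) $ i $ j | Inr k \<Rightarrow> - f (grid s t n k) $ i $ j) *
      indicator {(case l of Inl k \<Rightarrow> grid u t n k | Inr k \<Rightarrow> grid s t n k)..<
                 (case l of Inl k \<Rightarrow> grid u t n (Suc k) | Inr k \<Rightarrow> grid s t n (Suc k))} r)"
  unfolding step_approx_def sum.Plus[OF finite_lessThan finite_lessThan] comp_def by (simp add: sum_negf)

lemma riemann_ito_sum_diff_as_sum:
  "(riemann_ito_sum W f u t n \<omega> - riemann_ito_sum W f s t n \<omega>) $ i = (\<Sum>j\<in>UNIV. \<Sum>l\<in>{..<n} <+> {..<n}.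
      (case l of Inl k \<Rightarrow> f (grid u t n k) $ i $ j | Inr k \<Rightarrow> - f (grid s t n k) $ i $ j) *
      (W (case l of Inl k \<Rightarrow> grid u t n (Suc k) | Inr k \<Rightarrow> grid s t n (Suc k)) \<omega> $ j
       - W (case l of Inl k \<Rightarrow> grid u t n k | Inr k \<Rightarrow> grid s t n k) \<omega> $ j))"
  by (simp add: riemann_ito_sum_def grid_def matrix_vector_mult_def sum_component sum.Plus
      sum_subtractf[symmetric] sum.swap[of _ "{..<n}"] sum_negf)

lemma integrable_step_approx_diff_sq:
  assumes "s \<le> t" "u \<le> t"
  shows "integrable lborel (\<lambda>r. (step_approx f u t n i j r - step_approx f s t n i j r)\<^sup>2)"
  unfolding step_approx_diff_as_sum
  by (rule integral_step_sq(1)) (use grid_le_grid_Suc[OF assms(1)] grid_le_grid_Suc[OF assms(2)] in \<open>auto split: sum.splits\<close>)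

lemma norm_sq_sum_le:
  fixes y :: "'n::finite \<Rightarrow> 'm::finite \<Rightarrow> real"
  shows "(norm (\<chi> i. \<Sum>j\<in>UNIV. y i j))\<^sup>2 \<le> real CARD('m) * (\<Sum>i\<in>UNIV. \<Sum>j\<in>UNIV. (y i j)\<^sup>2)"
proof -
  have "(norm (\<chi> i. \<Sum>j\<in>UNIV. y i j))\<^sup>2 = (\<Sum>i\<in>UNIV. (\<Sum>j\<in>UNIV. y i j)\<^sup>2)"
    by (simp add: norm_vec_def L2_set_def sum_nonneg)
  also have "\<dots> \<le> (\<Sum>i\<in>UNIV. (\<Sum>j\<in>UNIV. (y i j)\<^sup>2) * real CARD('m))"
    by (intro sum_mono) (rule sum_squared_le_sum_of_squares)
  finally show ?thesis by (simp add: sum_distrib_left mult.commute)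
qed

lemma borel_measurable_matrix_vector_mult [measurable]:
  "g \<in> borel_measurable M \<Longrightarrow> (\<lambda>x. (B::real^'m^'d) *v g x) \<in> borel_measurable M"
  by (rule measurable_compose[where f=g and g="(*v) B"])
     (auto intro: borel_measurable_continuous_onI linear_continuous_on matrix_vector_mul_linear)

lemma second_moment_riemann_ito_sum_diff:
  fixes W :: "real \<Rightarrow> 'a \<Rightarrow> real^'m" and f :: "real \<Rightarrow> real^'m^'d"
  assumes BM: "two_sided_BM M W" and st: "s \<le> t" and ut: "u \<le> t"
  shows "integrable M (\<lambda>\<omega>. (norm (riemann_ito_sum W f u t n \<omega> - riemann_ito_sum W f s t n \<omega>))\<^sup>2)"
    and "(LINT \<omega>|M. (norm (riemann_ito_sum W f u t n \<omega> - riemann_ito_sum W f s t n \<omega>))\<^sup>2)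
      \<le> real CARD('m) * (\<Sum>i\<in>UNIV. \<Sum>j\<in>UNIV. LINT r|lborel. (step_approx f u t n i j r - step_approx f s t n i j r)\<^sup>2)"
proof -
  define D where "D \<omega> = riemann_ito_sum W f u t n \<omega> - riemann_ito_sum W f s t n \<omega>" for \<omega>
  let ?L = "{..<n} <+> {..<n}"
  define a where "a l = (case l of Inl k \<Rightarrow> grid u t n k | Inr k \<Rightarrow> grid s t n k)" for l
  define b where "b l = (case l of Inl k \<Rightarrow> grid u t n (Suc k) | Inr k \<Rightarrow> grid s t n (Suc k))" for l
  define c where "c i j l = (case l of Inl k \<Rightarrow> f (grid u t n k) $ i $ j | Inr k \<Rightarrow> - f (grid s t n k) $ i $ j)"
    for i :: 'd and j :: 'm and l
  define Y where "Y i j \<omega> = (\<Sum>l\<in>?L. c i j l * (W (b l) \<omega> $ j - W (a l) \<omega> $ j))" for i j \<omega>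
  have ab: "l \<in> ?L \<Longrightarrow> a l \<le> b l" for l
    using grid_le_grid_Suc[OF st] grid_le_grid_Suc[OF ut] by (auto simp: a_def b_def split: sum.splits)
  have D: "D \<omega> = (\<chi> i. \<Sum>j\<in>UNIV. Y i j \<omega>)" for \<omega>
    unfolding vec_eq_iff D_def Y_def a_def b_def c_def
    by (simp add: riemann_ito_sum_diff_as_sum del: vector_minus_component)
  have Y: "integrable M (\<lambda>\<omega>. (Y i j \<omega>)\<^sup>2)"
    "(LINT \<omega>|M. (Y i j \<omega>)\<^sup>2) = (LINT r|lborel. (step_approx f u t n i j r - step_approx f s t n i j r)\<^sup>2)"
    for i j
    unfolding Y_def step_approx_diff_as_sum a_def[symmetric] b_def[symmetric] c_def[symmetric]
    using ito_isometry_step[OF BM, where L="?L" and a=a and b=b and c="c i j" and j=j] ab by simp_all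
  have [measurable]: "W r \<in> borel_measurable M" for r using BM unfolding two_sided_BM_def by blast
  have "(\<lambda>\<omega>. (norm (D \<omega>))\<^sup>2) \<in> borel_measurable M"
    unfolding D_def riemann_ito_sum_def by measurable
  moreover have bound: "(norm (D \<omega>))\<^sup>2 \<le> real CARD('m) * (\<Sum>i\<in>UNIV. \<Sum>j\<in>UNIV. (Y i j \<omega>)\<^sup>2)" for \<omega>
    unfolding D by (rule norm_sq_sum_le)
  moreover have int: "integrable M (\<lambda>\<omega>. real CARD('m) * (\<Sum>i\<in>UNIV. \<Sum>j\<in>UNIV. (Y i j \<omega>)\<^sup>2))"
    using Y by auto
  ultimately have int_D: "integrable M (\<lambda>\<omega>. (norm (D \<omega>))\<^sup>2)"
    by (intro Bochner_Integration.integrable_bound[OF int]) (auto intro: order_trans[OF _ abs_ge_self])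
  have "(LINT \<omega>|M. (norm (D \<omega>))\<^sup>2) \<le> (LINT \<omega>|M. real CARD('m) * (\<Sum>i\<in>UNIV. \<Sum>j\<in>UNIV. (Y i j \<omega>)\<^sup>2))"
    by (rule integral_mono[OF int_D int bound])
  also have "\<dots> = real CARD('m) * (\<Sum>i\<in>UNIV. \<Sum>j\<in>UNIV. LINT r|lborel. (step_approx f u t n i j r - step_approx f s t n i j r)\<^sup>2)"
    using Y by simp
  finally show "(LINT \<omega>|M. (norm (riemann_ito_sum W f u t n \<omega> - riemann_ito_sum W f s t n \<omega>))\<^sup>2)
      \<le> real CARD('m) * (\<Sum>i\<in>UNIV. \<Sum>j\<in>UNIV. LINT r|lborel. (step_approx f u t n i j r - step_approx f s t n i j r)\<^sup>2)"
    by (simp add: D_def)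
  show "integrable M (\<lambda>\<omega>. (norm (riemann_ito_sum W f u t n \<omega> - riemann_ito_sum W f s t n \<omega>))\<^sup>2)"
    using int_D by (simp add: D_def)
qed

lemma step_approx_diff_sq_le:
  fixes f :: "real \<Rightarrow> real^'m^'d"
  assumes su: "s < u" and ut: "u < t" and n: "0 < n" and lam: "lam < 0"
    and bound: "\<And>x. x \<le> t \<Longrightarrow> \<bar>f x $ i $ j\<bar> \<le> C * exp (lam * (t - x))"
    and close: "\<And>x y. x \<in> {s..t} \<Longrightarrow> y \<in> {s..t} \<Longrightarrow> \<bar>x - y\<bar> \<le> (t - s) / n \<Longrightarrow> \<bar>f x $ i $ j - f y $ i $ j\<bar> \<le> \<delta>"
  shows "(step_approx f u t n i j r - step_approx f s t n i j r)\<^sup>2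
    \<le> indicator {s..u} r * (C\<^sup>2 * exp (2 * lam * (t - r))) + indicator {u..t} r * \<delta>\<^sup>2"
proof -
  have st: "s < t" using su ut by simp
  consider "r < s \<or> t \<le> r" | "s \<le> r" "r < u" | "u \<le> r" "r < t" by linarith
  then show ?thesis
  proof cases
    case 1
    then have "step_approx f u t n i j r = 0" "step_approx f s t n i j r = 0"
      using 1 su by (auto intro!: step_approx_outside[OF ut n] step_approx_outside[OF st n])
    then show ?thesis by simp
  next
    case 2
    have "r < t" using 2 ut by simp
    then obtain p where p: "p \<le> r" "step_approx f s t n i j r = f p $ i $ j"
      using step_approx_eval[OF st n 2(1)] by blast
    have "\<bar>f p $ i $ j\<bar> \<le> C * exp (lam * (t - p))" using bound[of p] p 2 ut by auto
    from power_mono[OF this abs_ge_zero, of 2]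
    have "(f p $ i $ j)\<^sup>2 \<le> (C * exp (lam * (t - p)))\<^sup>2" by simp
    also have "\<dots> = C\<^sup>2 * exp (2 * lam * (t - p))"
      by (simp add: power2_eq_square exp_add[symmetric] algebra_simps)
    also have "\<dots> \<le> C\<^sup>2 * exp (2 * lam * (t - r))"
      using p lam by (intro mult_left_mono) (auto simp: mult_le_cancel_left)
    moreover have "step_approx f u t n i j r = 0" using 2 by (intro step_approx_outside[OF ut n]) simp
    ultimately show ?thesis using 2 p by (simp add: indicator_def)
  next
    case 3
    obtain p where p: "u \<le> p" "p \<le> r" "r - p \<le> (t - u) / n" "step_approx f u t n i j r = f p $ i $ j"
      using step_approx_eval[OF ut n 3] .
    have "s \<le> r" using 3 su by simp
    then obtain q where q: "s \<le> q" "q \<le> r" "r - q \<le> (t - s) / n" "step_approx f s t n i j r = f q $ i $ j"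
      using step_approx_eval[OF st n _ 3(2)] by blast
    have "(t - u) / n \<le> (t - s) / n" using su n by (simp add: divide_right_mono)
    then have "\<bar>f p $ i $ j - f q $ i $ j\<bar> \<le> \<delta>" using p q su 3 by (intro close) auto
    from power_mono[OF this abs_ge_zero, of 2]
    have "(step_approx f u t n i j r - step_approx f s t n i j r)\<^sup>2 \<le> \<delta>\<^sup>2"
      using p q by simp
    moreover have "0 \<le> indicator {s..u} r * (C\<^sup>2 * exp (2 * lam * (t - r)))" by simp
    moreover have "indicator {u..t} r = (1::real)" using 3 by (simp add: indicator_def)
    ultimately show ?thesis by (metis add.commute add_increasing2 mult_1)
  qed
qed

lemma integral_exp_Icc_le:
  fixes lam :: real
  assumes "s \<le> u" and "lam < 0"
  shows "integrable lborel (\<lambda>r. indicator {s..u} r * (C * exp (lam * (t - r))))"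
    and "0 \<le> C \<Longrightarrow> (LINT r|lborel. indicator {s..u} r * (C * exp (lam * (t - r)))) \<le> C * exp (lam * (t - u)) / - lam"
proof -
  define F where "F r = C * exp (lam * (t - r)) / - lam" for r
  have cont: "continuous_on {s..u} (\<lambda>r. C * exp (lam * (t - r)))" by (intro continuous_intros)
  show "integrable lborel (\<lambda>r. indicator {s..u} r * (C * exp (lam * (t - r))))"
    using borel_integrable_compact[OF compact_Icc cont] by simp
  have "(F has_real_derivative C * exp (lam * (t - x))) (at x within {s..u})" for x
    unfolding F_def using \<open>lam < 0\<close> by (auto intro!: derivative_eq_intros)
  then have "(LINT r|lborel. indicator {s..u} r * (C * exp (lam * (t - r)))) = F u - F s"
    using integral_FTC_Icc[OF \<open>s \<le> u\<close> _ cont] by (simp add: has_real_derivative_iff_has_vector_derivative)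
  moreover assume "0 \<le> C"
  then have "0 \<le> F s" unfolding F_def using \<open>lam < 0\<close> by (intro divide_nonneg_pos) auto
  ultimately show "(LINT r|lborel. indicator {s..u} r * (C * exp (lam * (t - r)))) \<le> C * exp (lam * (t - u)) / - lam"
    by (simp add: F_def)
qed

lemma integral_step_approx_diff_sq_le:
  fixes f :: "real \<Rightarrow> real^'m^'d"
  assumes su: "s < u" and ut: "u < t" and n: "0 < n" and lam: "lam < 0"
    and bound: "\<And>x. x \<le> t \<Longrightarrow> \<bar>f x $ i $ j\<bar> \<le> C * exp (lam * (t - x))"
    and close: "\<And>x y. x \<in> {s..t} \<Longrightarrow> y \<in> {s..t} \<Longrightarrow> \<bar>x - y\<bar> \<le> (t - s) / n \<Longrightarrow> \<bar>f x $ i $ j - f y $ i $ j\<bar> \<le> \<delta>"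
  shows "(LINT r|lborel. (step_approx f u t n i j r - step_approx f s t n i j r)\<^sup>2)
    \<le> C\<^sup>2 * exp (2 * lam * (t - u)) / (- 2 * lam) + (t - u) * \<delta>\<^sup>2"
proof -
  have lam2: "2 * lam < 0" using lam by simp
  have exp2: "C\<^sup>2 * exp (2 * lam * (t - r)) = C\<^sup>2 * exp ((2 * lam) * (t - r))" for r by simp
  note E = integral_exp_Icc_le[OF less_imp_le[OF su] lam2, of "C\<^sup>2" t]
  have I: "integrable lborel (\<lambda>r. indicator {u..t} r * \<delta>\<^sup>2 :: real)"
    by (intro integrable_mult_left) (simp add: emeasure_lborel_Icc_eq)
  have "(LINT r|lborel. (step_approx f u t n i j r - step_approx f s t n i j r)\<^sup>2)
      \<le> (LINT r|lborel. indicator {s..u} r * (C\<^sup>2 * exp (2 * lam * (t - r))) + indicator {u..t} r * \<delta>\<^sup>2)"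
    by (rule integral_mono[OF integrable_step_approx_diff_sq Bochner_Integration.integrable_add[OF E(1) I]])
       (use su ut step_approx_diff_sq_le[OF su ut n lam bound close] in auto)
  also have "\<dots> = (LINT r|lborel. indicator {s..u} r * (C\<^sup>2 * exp (2 * lam * (t - r)))) + (t - u) * \<delta>\<^sup>2"
    using E(1) I ut by simp
  finally show ?thesis using E(2) by simp
qed

section \<open>Almost sure convergence of the pullback Wiener integrals\<close>

lemma abs_entry_le_norm: "\<bar>(M::real^'m^'d) $ i $ j\<bar> \<le> norm M"
  by (rule order_trans[OF component_le_norm_cart Finite_Cartesian_Product.norm_nth_le])

lemma abs_matrix_mult_entry_le:
  fixes P :: "real^'k^'d" and S :: "real^'m^'k"
  assumes "\<And>k l. \<bar>S $ k $ l\<bar> \<le> c"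
  shows "\<bar>(P ** S) $ i $ j\<bar> \<le> real CARD('k) * mnorm P * c"
proof -
  have "\<bar>(P ** S) $ i $ j\<bar> \<le> (\<Sum>k\<in>UNIV. \<bar>P $ i $ k * S $ k $ j\<bar>)"
    unfolding matrix_matrix_mult_def by (simp add: sum_abs)
  also have "\<dots> \<le> (\<Sum>k\<in>(UNIV::'k set). mnorm P * c)"
    using assms by (intro sum_mono) (auto simp: abs_mult intro!: mult_mono abs_entry_le_mnorm mnorm_nonneg)
  finally show ?thesis by simp
qed

lemma continuous_on_matrix_mult:
  fixes P :: "real \<Rightarrow> real^'k^'d" and Q :: "real \<Rightarrow> real^'m^'k"
  assumes "\<And>i k. continuous_on S (\<lambda>r. P r $ i $ k)" and "\<And>k j. continuous_on S (\<lambda>r. Q r $ k $ j)"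
  shows "continuous_on S (\<lambda>r. P r ** Q r)"
proof -
  have "continuous_on S (\<lambda>r. (P r ** Q r) $ i $ j)" for i j
    unfolding matrix_matrix_mult_def using assms by (auto intro!: continuous_on_sum continuous_on_mult)
  then have "continuous_on S (\<lambda>r. (P r ** Q r) $ i)" for i
    by (rule continuous_on_vec_lambda[where f="\<lambda>j r. (P r ** Q r) $ i $ j", simplified])
  then show ?thesis
    by (rule continuous_on_vec_lambda[where f="\<lambda>i r. (P r ** Q r) $ i", simplified])
qed

lemma continuous_on_matrix_vector_mult:
  fixes P :: "real \<Rightarrow> real^'k^'d" and v :: "real \<Rightarrow> real^'k"
  assumes "continuous_on S P" "continuous_on S v"
  shows "continuous_on S (\<lambda>r. P r *v v r)"
proof -
  have "continuous_on S (\<lambda>r. (P r *v v r) $ i)" for i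
    unfolding matrix_vector_mult_def using assms by (auto intro!: continuous_intros)
  then show ?thesis by (rule continuous_on_vec_lambda[where f="\<lambda>i r. (P r *v v r) $ i", simplified])
qed

text \<open>By the Ito isometry the second moment is the squared \<open>L\<^sup>2\<close>-distance of the two step
  approximations of \<open>f\<close>: on \<open>[s, u]\<close> it is controlled by the exponential bound on \<open>f\<close>, on
  \<open>[u, t]\<close> by the uniform continuity of \<open>f\<close>.\<close>
lemma eventually_second_moment_riemann_ito_sum_diff_le:
  fixes W :: "real \<Rightarrow> 'a \<Rightarrow> real^'m" and f :: "real \<Rightarrow> real^'m^'d"
  assumes BM: "two_sided_BM M W" and lam: "lam < 0"
    and f_cont: "continuous_on {s..t} f"
    and bound: "\<And>x i j. x \<le> t \<Longrightarrow> \<bar>f x $ i $ j\<bar> \<le> C * exp (lam * (t - x))"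
    and su: "s < u" and ut: "u < t" and \<eta>: "0 < \<eta>"
  shows "eventually (\<lambda>n. (LINT \<omega>|M. (norm (riemann_ito_sum W f u t n \<omega> - riemann_ito_sum W f s t n \<omega>))\<^sup>2)
      \<le> real CARD('m) * real CARD('d) * real CARD('m) * C\<^sup>2 / (- 2 * lam) * exp (2 * lam * (t - u)) + \<eta>) sequentially"
proof -
  define N where "N = real CARD('m) * real CARD('d) * real CARD('m)"
  define \<delta> where "\<delta> = sqrt (\<eta> / (N * (t - u)))"
  have "0 < N" by (simp add: N_def)
  then have "0 < \<delta>" and \<delta>: "N * ((t - u) * \<delta>\<^sup>2) = \<eta>" using \<eta> ut by (simp_all add: \<delta>_def)
  have "uniformly_continuous_on {s..t} f" using f_cont by (rule compact_uniformly_continuous) simp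
  then obtain \<rho> where "0 < \<rho>" and \<rho>: "\<And>x y. x \<in> {s..t} \<Longrightarrow> y \<in> {s..t} \<Longrightarrow> dist y x < \<rho> \<Longrightarrow> dist (f y) (f x) < \<delta>"
    unfolding uniformly_continuous_on_def using \<open>0 < \<delta>\<close> by metis
  have "((\<lambda>n::nat. (t - s) / real n) \<longlongrightarrow> 0) sequentially" by real_asymp
  then have "eventually (\<lambda>n::nat. (t - s) / real n < \<rho>) sequentially"
    using \<open>0 < \<rho>\<close> by (rule order_tendstoD(2))
  with eventually_gt_at_top[of 0]
  have "eventually (\<lambda>n::nat. 0 < n \<and> (t - s) / real n < \<rho>) sequentially"
    by (rule eventually_conj)
  then show ?thesis
  proof eventually_elim
    case (elim n)
    have close: "\<bar>f x $ i $ j - f y $ i $ j\<bar> \<le> \<delta>"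
      if "x \<in> {s..t}" "y \<in> {s..t}" "\<bar>x - y\<bar> \<le> (t - s) / n" for x y i j
      using \<rho>[OF that(2,1)] that(3) elim abs_entry_le_norm[of "f x - f y" i j]
      by (simp add: dist_norm dist_real_def)
    have "(LINT \<omega>|M. (norm (riemann_ito_sum W f u t n \<omega> - riemann_ito_sum W f s t n \<omega>))\<^sup>2)
        \<le> real CARD('m) * (\<Sum>i\<in>UNIV. \<Sum>j\<in>UNIV. LINT r|lborel. (step_approx f u t n i j r - step_approx f s t n i j r)\<^sup>2)"
      using second_moment_riemann_ito_sum_diff(2)[OF BM, of s t u f n] su ut by simp
    also have "\<dots> \<le> real CARD('m) * (\<Sum>i\<in>(UNIV::'d set). \<Sum>j\<in>(UNIV::'m set).
        C\<^sup>2 * exp (2 * lam * (t - u)) / (- 2 * lam) + (t - u) * \<delta>\<^sup>2)"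
      using elim by (intro mult_left_mono sum_mono integral_step_approx_diff_sq_le[OF su ut _ lam bound close]) auto
    also have "\<dots> = N * C\<^sup>2 / (- 2 * lam) * exp (2 * lam * (t - u)) + \<eta>"
      using \<delta> by (simp add: N_def algebra_simps)
    finally show ?case by (simp add: N_def)
  qed
qed

lemma abs_Phi_mult_entry_le:
  fixes A :: "real^'d^'d" and S :: "real^'m^'d"
  assumes Phi: "\<And>\<tau>. 0 \<le> \<tau> \<Longrightarrow> mnorm (mexp (\<tau> *\<^sub>R A)) \<le> exp (lam * \<tau>)"
    and S: "\<And>k l. \<bar>S $ k $ l\<bar> \<le> C" and "x \<le> t"
  shows "\<bar>(mexp ((t - x) *\<^sub>R A) ** S) $ i $ j\<bar> \<le> real CARD('d) * C * exp (lam * (t - x))"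
proof -
  have "\<bar>(mexp ((t - x) *\<^sub>R A) ** S) $ i $ j\<bar> \<le> real CARD('d) * mnorm (mexp ((t - x) *\<^sub>R A)) * C"
    by (rule abs_matrix_mult_entry_le[OF S])
  also have "\<dots> \<le> real CARD('d) * exp (lam * (t - x)) * C"
    using Phi[of "t - x"] \<open>x \<le> t\<close> order_trans[OF abs_ge_zero S] by (intro mult_mono) (auto simp: mnorm_nonneg)
  finally show ?thesis by (simp add: mult_ac)
qed

lemma continuous_on_Phi_mult:
  fixes A :: "real^'d^'d" and \<sigma> :: "real \<Rightarrow> real^'m^'d"
  assumes "\<And>i j. continuous_on UNIV (\<lambda>r. \<sigma> r $ i $ j)"
  shows "continuous_on S (\<lambda>r. mexp ((t - r) *\<^sub>R A) ** \<sigma> r)"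
proof (rule continuous_on_matrix_mult)
  show "continuous_on S (\<lambda>r. mexp ((t - r) *\<^sub>R A) $ i $ k)" for i k
    by (intro continuous_on_component continuous_on_mexp_backward)
  show "continuous_on S (\<lambda>r. \<sigma> r $ k $ j)" for k j
    using assms continuous_on_subset by blast
qed

lemma (in finite_measure) measure_norm_add4_gt_le:
  fixes X\<^sub>1 X\<^sub>2 X\<^sub>3 X\<^sub>4 :: "'a \<Rightarrow> 'b::real_normed_vector"
  assumes [measurable]: "X\<^sub>1 \<in> borel_measurable M" "X\<^sub>2 \<in> borel_measurable M"
    "X\<^sub>3 \<in> borel_measurable M" "X\<^sub>4 \<in> borel_measurable M"
  shows "measure M {\<omega>\<in>space M. 4 * \<epsilon> < norm (X\<^sub>1 \<omega> + X\<^sub>2 \<omega> + X\<^sub>3 \<omega> + X\<^sub>4 \<omega>)}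
    \<le> measure M {\<omega>\<in>space M. \<epsilon> < norm (X\<^sub>1 \<omega>)} + measure M {\<omega>\<in>space M. \<epsilon> < norm (X\<^sub>2 \<omega>)}
      + measure M {\<omega>\<in>space M. \<epsilon> < norm (X\<^sub>3 \<omega>)} + measure M {\<omega>\<in>space M. \<epsilon> < norm (X\<^sub>4 \<omega>)}"
proof -
  let ?E = "\<lambda>X. {\<omega>\<in>space M. \<epsilon> < norm (X \<omega>)}"
  have "{\<omega>\<in>space M. 4 * \<epsilon> < norm (X\<^sub>1 \<omega> + X\<^sub>2 \<omega> + X\<^sub>3 \<omega> + X\<^sub>4 \<omega>)} \<subseteq> ((?E X\<^sub>1 \<union> ?E X\<^sub>2) \<union> ?E X\<^sub>3) \<union> ?E X\<^sub>4"
  proof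
    fix \<omega> assume \<omega>: "\<omega> \<in> {\<omega>\<in>space M. 4 * \<epsilon> < norm (X\<^sub>1 \<omega> + X\<^sub>2 \<omega> + X\<^sub>3 \<omega> + X\<^sub>4 \<omega>)}"
    have triangle: "norm (X\<^sub>1 \<omega> + X\<^sub>2 \<omega> + X\<^sub>3 \<omega> + X\<^sub>4 \<omega>) \<le> norm (X\<^sub>1 \<omega>) + norm (X\<^sub>2 \<omega>) + norm (X\<^sub>3 \<omega>) + norm (X\<^sub>4 \<omega>)"
      using norm_triangle_ineq[of "X\<^sub>1 \<omega> + X\<^sub>2 \<omega> + X\<^sub>3 \<omega>" "X\<^sub>4 \<omega>"]
        norm_triangle_ineq[of "X\<^sub>1 \<omega> + X\<^sub>2 \<omega>" "X\<^sub>3 \<omega>"] norm_triangle_ineq[of "X\<^sub>1 \<omega>" "X\<^sub>2 \<omega>"]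
      by linarith
    show "\<omega> \<in> ((?E X\<^sub>1 \<union> ?E X\<^sub>2) \<union> ?E X\<^sub>3) \<union> ?E X\<^sub>4"
    proof (rule ccontr)
      assume "\<omega> \<notin> ((?E X\<^sub>1 \<union> ?E X\<^sub>2) \<union> ?E X\<^sub>3) \<union> ?E X\<^sub>4"
      then have "norm (X\<^sub>1 \<omega>) \<le> \<epsilon>" "norm (X\<^sub>2 \<omega>) \<le> \<epsilon>" "norm (X\<^sub>3 \<omega>) \<le> \<epsilon>" "norm (X\<^sub>4 \<omega>) \<le> \<epsilon>"
        using \<omega> by auto
      then show False using \<omega> triangle by simp
    qed
  qed
  then have "measure M {\<omega>\<in>space M. 4 * \<epsilon> < norm (X\<^sub>1 \<omega> + X\<^sub>2 \<omega> + X\<^sub>3 \<omega> + X\<^sub>4 \<omega>)} \<le> measure M (((?E X\<^sub>1 \<union> ?E X\<^sub>2) \<union> ?E X\<^sub>3) \<union> ?E X\<^sub>4)"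
    by (intro finite_measure_mono) measurable
  also have "\<dots> \<le> measure M (?E X\<^sub>1) + measure M (?E X\<^sub>2) + measure M (?E X\<^sub>3) + measure M (?E X\<^sub>4)"
    by (intro order_trans[OF measure_Un_le] add_mono order_refl) measurable
  finally show ?thesis .
qed

lemma (in finite_measure) measure_norm_gt_le_second_moment:
  fixes X :: "'a \<Rightarrow> 'b::real_normed_vector"
  assumes [measurable]: "X \<in> borel_measurable M" and "integrable M (\<lambda>\<omega>. (norm (X \<omega>))\<^sup>2)" and "0 < \<epsilon>"
  shows "measure M {\<omega>\<in>space M. \<epsilon> < norm (X \<omega>)} \<le> (LINT \<omega>|M. (norm (X \<omega>))\<^sup>2) / \<epsilon>\<^sup>2"
proof -
  have "measure M {\<omega>\<in>space M. \<epsilon> < norm (X \<omega>)} \<le> measure M {\<omega>\<in>space M. \<bar>norm (X \<omega>)\<bar> \<ge> \<epsilon>}"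
    by (intro finite_measure_mono) auto
  also have "\<dots> \<le> (LINT \<omega>|M. (norm (X \<omega>))\<^sup>2) / \<epsilon>\<^sup>2"
    using assms by (intro second_moment_method) auto
  finally show ?thesis .
qed

text \<open>\<open>J\<close> and \<open>Z\<close> are only limits in probability of Riemann sums, so their distance is
  controlled through Riemann sums over \<open>[u, t]\<close> and over \<open>[s, t]\<close> with \<open>s\<close> far in the past.\<close>
lemma measure_dist_wiener_integral_inf_le:
  fixes W :: "real \<Rightarrow> 'a \<Rightarrow> real^'m" and f :: "real \<Rightarrow> real^'m^'d"
  assumes BM: "two_sided_BM M W" and \<epsilon>: "0 < \<epsilon>" and ut: "u \<le> t"
    and J: "wiener_integral M W f u t J"
    and Z: "wiener_integral_inf M W f t Z"
    and second_moment: "\<And>s \<eta>. s < u \<Longrightarrow> 0 < \<eta> \<Longrightarrow> eventually (\<lambda>n.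
      (LINT \<omega>|M. (norm (riemann_ito_sum W f u t n \<omega> - riemann_ito_sum W f s t n \<omega>))\<^sup>2) \<le> B + \<eta>) sequentially"
  shows "measure M {\<omega>\<in>space M. 4 * \<epsilon> < norm (J \<omega> - Z \<omega>)} \<le> B / \<epsilon>\<^sup>2"
proof (rule field_le_epsilon)
  interpret prob_space M using BM unfolding two_sided_BM_def by blast
  fix \<eta> :: real assume \<eta>: "0 < \<eta>"
  have [measurable]: "W r \<in> borel_measurable M" for r using BM unfolding two_sided_BM_def by blast
  have R[measurable]: "riemann_ito_sum W f a b n \<in> borel_measurable M" for a b n
    unfolding riemann_ito_sum_def by measurable
  have [measurable]: "J \<in> borel_measurable M" "Z \<in> borel_measurable M"
    using J Z unfolding wiener_integral_def wiener_integral_inf_def by blast+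
  obtain I where I: "\<And>s. s \<le> t \<Longrightarrow> wiener_integral M W f s t (I s)"
    and I_Z: "((\<lambda>s. measure M {\<omega>\<in>space M. \<epsilon> < norm (I s \<omega> - Z \<omega>)}) \<longlongrightarrow> 0) at_bot"
    using Z \<epsilon> unfolding wiener_integral_inf_def by blast
  obtain b where b: "\<And>s. s \<le> b \<Longrightarrow> measure M {\<omega>\<in>space M. \<epsilon> < norm (I s \<omega> - Z \<omega>)} < \<eta> / 4"
    using order_tendstoD(2)[OF I_Z, of "\<eta> / 4"] \<eta> by (auto simp: eventually_at_bot_linorder)
  define s where "s = min b (u - 1)"
  have s: "s < u" "s \<le> t" "s \<le> b" using ut by (auto simp: s_def)
  have [measurable]: "I s \<in> borel_measurable M" using I[OF s(2)] unfolding wiener_integral_def by blast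
  have "eventually (\<lambda>n. measure M {\<omega>\<in>space M. \<epsilon> < norm (riemann_ito_sum W f u t n \<omega> - J \<omega>)} < \<eta> / 4
      \<and> (LINT \<omega>|M. (norm (riemann_ito_sum W f u t n \<omega> - riemann_ito_sum W f s t n \<omega>))\<^sup>2) \<le> B + \<eta> * \<epsilon>\<^sup>2 / 4
      \<and> measure M {\<omega>\<in>space M. \<epsilon> < norm (riemann_ito_sum W f s t n \<omega> - I s \<omega>)} < \<eta> / 4) sequentially"
    using J I[OF s(2)] \<epsilon> \<eta> unfolding wiener_integral_def
    by (intro eventually_conj order_tendstoD(2) second_moment s(1)) auto
  then obtain n where n1: "measure M {\<omega>\<in>space M. \<epsilon> < norm (riemann_ito_sum W f u t n \<omega> - J \<omega>)} < \<eta> / 4"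
    and n2: "(LINT \<omega>|M. (norm (riemann_ito_sum W f u t n \<omega> - riemann_ito_sum W f s t n \<omega>))\<^sup>2) \<le> B + \<eta> * \<epsilon>\<^sup>2 / 4"
    and n3: "measure M {\<omega>\<in>space M. \<epsilon> < norm (riemann_ito_sum W f s t n \<omega> - I s \<omega>)} < \<eta> / 4"
    using eventually_happens'[OF trivial_limit_sequentially] by blast
  let ?D = "\<lambda>\<omega>. riemann_ito_sum W f u t n \<omega> - riemann_ito_sum W f s t n \<omega>"
  have "measure M {\<omega>\<in>space M. \<epsilon> < norm (?D \<omega>)} \<le> (LINT \<omega>|M. (norm (?D \<omega>))\<^sup>2) / \<epsilon>\<^sup>2"
    using second_moment_riemann_ito_sum_diff(1)[OF BM s(2) ut] \<epsilon> by (intro measure_norm_gt_le_second_moment) auto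
  also have "\<dots> \<le> (B + \<eta> * \<epsilon>\<^sup>2 / 4) / \<epsilon>\<^sup>2" using n2 by (simp add: divide_right_mono)
  finally have n2': "measure M {\<omega>\<in>space M. \<epsilon> < norm (?D \<omega>)} \<le> B / \<epsilon>\<^sup>2 + \<eta> / 4"
    using \<epsilon> by (simp add: add_divide_distrib)
  have "J \<omega> - Z \<omega> = (J \<omega> - riemann_ito_sum W f u t n \<omega>) + ?D \<omega> + (riemann_ito_sum W f s t n \<omega> - I s \<omega>) + (I s \<omega> - Z \<omega>)"
    for \<omega> by (simp add: algebra_simps)
  then have "measure M {\<omega>\<in>space M. 4 * \<epsilon> < norm (J \<omega> - Z \<omega>)}
      \<le> measure M {\<omega>\<in>space M. \<epsilon> < norm (J \<omega> - riemann_ito_sum W f u t n \<omega>)} + measure M {\<omega>\<in>space M. \<epsilon> < norm (?D \<omega>)}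
        + measure M {\<omega>\<in>space M. \<epsilon> < norm (riemann_ito_sum W f s t n \<omega> - I s \<omega>)} + measure M {\<omega>\<in>space M. \<epsilon> < norm (I s \<omega> - Z \<omega>)}"
    using measure_norm_add4_gt_le[of "\<lambda>\<omega>. J \<omega> - riemann_ito_sum W f u t n \<omega>" ?D
        "\<lambda>\<omega>. riemann_ito_sum W f s t n \<omega> - I s \<omega>" "\<lambda>\<omega>. I s \<omega> - Z \<omega>" \<epsilon>]
    by simp
  also have "\<dots> \<le> B / \<epsilon>\<^sup>2 + \<eta>"
    using n1 n2' n3 b[OF s(3)] by (simp add: norm_minus_commute)
  finally show "measure M {\<omega>\<in>space M. 4 * \<epsilon> < norm (J \<omega> - Z \<omega>)} \<le> B / \<epsilon>\<^sup>2 + \<eta>" .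
qed

lemma (in prob_space) AE_LIMSEQ_of_summable_measure:
  fixes X :: "nat \<Rightarrow> 'a \<Rightarrow> 'b::{real_normed_vector, second_countable_topology}"
  assumes [measurable]: "\<And>m. X m \<in> borel_measurable M" "Z \<in> borel_measurable M"
    and summable: "summable (\<lambda>m. measure M {\<omega>\<in>space M. e m < norm (X m \<omega> - Z \<omega>)})"
    and e: "e \<longlonglongrightarrow> 0"
  shows "AE \<omega> in M. (\<lambda>m. X m \<omega>) \<longlonglongrightarrow> Z \<omega>"
proof -
  have "{\<omega>\<in>space M. e m < norm (X m \<omega> - Z \<omega>)} \<in> sets M" for m by measurable
  then have "AE \<omega> in M. eventually (\<lambda>m. \<omega> \<in> space M - {\<omega>\<in>space M. e m < norm (X m \<omega> - Z \<omega>)}) sequentially"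
    by (rule borel_cantelli_AE1[OF _ _ summable]) (simp add: less_top[symmetric])
  then show ?thesis
  proof (rule AE_mp, intro AE_I2 impI)
    fix \<omega> assume "eventually (\<lambda>m. \<omega> \<in> space M - {\<omega>\<in>space M. e m < norm (X m \<omega> - Z \<omega>)}) sequentially"
    then have "eventually (\<lambda>m. norm (X m \<omega> - Z \<omega>) \<le> e m) sequentially"
      by eventually_elim auto
    then have "(\<lambda>m. X m \<omega> - Z \<omega>) \<longlonglongrightarrow> 0" by (rule Lim_null_comparison[OF _ e])
    then show "(\<lambda>m. X m \<omega>) \<longlonglongrightarrow> Z \<omega>" by (simp add: LIM_zero_iff)
  qed
qed

text \<open>Borel--Cantelli at the pullback times \<open>u m\<close> with thresholds \<open>4 e m\<close>, where
  \<open>e m = exp (lam (t - u m) / 2)\<close>: the thresholds and, by Chebyshev, the probabilities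
  \<open>O(exp (lam (t - u m)))\<close> both decay geometrically.\<close>
lemma AE_pullback_wiener_integral_LIMSEQ:
  fixes A :: "real^'d^'d" and \<sigma> :: "real \<Rightarrow> real^'m^'d" and W :: "real \<Rightarrow> 'a \<Rightarrow> real^'m"
    and J :: "nat \<Rightarrow> 'a \<Rightarrow> real^'d"
  assumes BM: "two_sided_BM M W" and lam: "lam < 0" and T: "0 < T"
    and Phi: "\<And>\<tau>. 0 \<le> \<tau> \<Longrightarrow> mnorm (mexp (\<tau> *\<^sub>R A)) \<le> exp (lam * \<tau>)"
    and \<sigma>_cont: "\<And>i j. continuous_on UNIV (\<lambda>r. \<sigma> r $ i $ j)"
    and \<sigma>_bound: "\<And>r i j. \<bar>\<sigma> r $ i $ j\<bar> \<le> C"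
    and J: "\<And>m. - (real m * T) \<le> t \<Longrightarrow> wiener_integral M W (\<lambda>r. mexp ((t - r) *\<^sub>R A) ** \<sigma> r) (- (real m * T)) t (J m)"
    and Z: "wiener_integral_inf M W (\<lambda>r. mexp ((t - r) *\<^sub>R A) ** \<sigma> r) t Z"
  shows "AE \<omega> in M. (\<lambda>m. J m \<omega>) \<longlonglongrightarrow> Z \<omega>"
proof -
  interpret prob_space M using BM unfolding two_sided_BM_def by blast
  define K where "K = real CARD('m) * real CARD('d) * real CARD('m) * (real CARD('d) * C)\<^sup>2 / (- 2 * lam)"
  have K: "eventually (\<lambda>n.
      (LINT \<omega>|M. (norm (riemann_ito_sum W (\<lambda>r. mexp ((t - r) *\<^sub>R A) ** \<sigma> r) u t n \<omega>
        - riemann_ito_sum W (\<lambda>r. mexp ((t - r) *\<^sub>R A) ** \<sigma> r) s t n \<omega>))\<^sup>2)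
        \<le> K * exp (2 * lam * (t - u)) + \<eta>) sequentially" if "s < u" "u < t" "0 < \<eta>" for s u \<eta>
    unfolding K_def
    by (intro eventually_second_moment_riemann_ito_sum_diff_le[OF BM lam continuous_on_Phi_mult[OF \<sigma>_cont]
        abs_Phi_mult_entry_le[OF Phi \<sigma>_bound]] that)
  obtain m\<^sub>0 :: nat where m\<^sub>0: "- t < real m\<^sub>0 * T" using ex_less_of_nat_mult[OF T] by blast
  define u where "u m = - (real (m + m\<^sub>0) * T)" for m
  define e where "e m = exp (lam * (t - u m) / 2)" for m
  define q where "q = exp (lam * T)"
  have "0 < q" "q < 1" using lam T by (simp_all add: q_def mult_neg_pos)
  have u_t: "u m < t" for m
  proof -
    have "0 \<le> real m * T" using T by simp
    then show ?thesis using m\<^sub>0 by (simp add: u_def algebra_simps)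
  qed
  have e_pow: "e m = exp (lam * (t - u 0) / 2) * exp (lam * T / 2) ^ m" for m
    by (simp add: e_def u_def exp_of_nat_mult[symmetric] exp_add[symmetric] algebra_simps add_divide_distrib)
  have J_u: "wiener_integral M W (\<lambda>r. mexp ((t - r) *\<^sub>R A) ** \<sigma> r) (u m) t (J (m + m\<^sub>0))" for m
    using J[of "m + m\<^sub>0"] u_t[of m] by (simp add: u_def)
  have [measurable]: "J (m + m\<^sub>0) \<in> borel_measurable M" "Z \<in> borel_measurable M" for m
    using J_u[of m] Z unfolding wiener_integral_def wiener_integral_inf_def by auto
  have "measure M {\<omega>\<in>space M. 4 * e m < norm (J (m + m\<^sub>0) \<omega> - Z \<omega>)} \<le> K * exp (2 * lam * (t - u m)) / (e m)\<^sup>2" for m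
    using u_t[of m] by (intro measure_dist_wiener_integral_inf_le[OF BM _ _ J_u Z] K) (auto simp: e_def)
  also have "K * exp (2 * lam * (t - u m)) / (e m)\<^sup>2 = K * exp (lam * (t - u 0)) * q ^ m" for m
  proof -
    have "(e m)\<^sup>2 = exp (lam * (t - u m))" by (simp add: e_def power2_eq_square exp_add[symmetric])
    moreover have "exp (2 * lam * (t - u m)) = exp (lam * (t - u m)) * exp (lam * (t - u m))"
      by (simp add: exp_add[symmetric])
    moreover have "exp (lam * (t - u m)) = exp (lam * (t - u 0)) * q ^ m"
      by (simp add: u_def q_def exp_of_nat_mult[symmetric] exp_add[symmetric] algebra_simps)
    ultimately show ?thesis by simp
  qed
  finally have "summable (\<lambda>m. measure M {\<omega>\<in>space M. 4 * e m < norm (J (m + m\<^sub>0) \<omega> - Z \<omega>)})"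
    using \<open>0 < q\<close> \<open>q < 1\<close>
    by (intro summable_comparison_test[OF _ summable_mult[OF summable_geometric]]) auto
  moreover have "(\<lambda>m. 4 * e m) \<longlonglongrightarrow> 0"
    unfolding e_pow using lam T by (intro tendsto_mult_right_zero LIMSEQ_power_zero) (simp_all add: mult_neg_pos)
  ultimately have "AE \<omega> in M. (\<lambda>m. J (m + m\<^sub>0) \<omega>) \<longlonglongrightarrow> Z \<omega>"
    by (intro AE_LIMSEQ_of_summable_measure[where e="\<lambda>m. 4 * e m"]) auto
  then show ?thesis by (auto simp: LIMSEQ_offset)
qed

section \<open>Fatou bounds for the pullback integrals\<close>

lemma fatou_eventually_less:
  fixes G :: "nat \<Rightarrow> real \<Rightarrow> real" and F :: "real \<Rightarrow> real"
  assumes G_nonneg: "\<And>m r. 0 \<le> G m r" and G_int: "\<And>m. integrable lborel (G m)"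
    and F_int: "integrable lborel F" and F_nonneg: "\<And>r. 0 \<le> F r"
    and below: "\<And>r \<delta>. 0 < \<delta> \<Longrightarrow> eventually (\<lambda>m. F r - \<delta> < G m r) sequentially"
    and y: "y < (LINT r|lborel. F r)"
  shows "eventually (\<lambda>m. y < (LINT r|lborel. G m r)) sequentially"
proof (cases "y < 0")
  case True
  have "0 \<le> (LINT r|lborel. G m r)" for m using G_nonneg by (simp add: integral_nonneg_AE)
  then show ?thesis using True by (intro always_eventually allI) (meson less_le_trans)
next
  case False
  have [measurable]: "G m \<in> borel_measurable lborel" for m using G_int by (rule borel_measurable_integrable)
  have "ennreal (F r) \<le> liminf (\<lambda>m. ennreal (G m r))" for r
  proof (unfold le_Liminf_iff, intro allI impI)
    fix z assume z: "z < ennreal (F r)"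
    then obtain z' where z': "z = ennreal z'" "0 \<le> z'" "z' < F r"
      by (metis ennreal_cases ennreal_less_iff ennreal_less_zero_iff le_less_linear less_imp_le
          not_less_iff_gr_or_eq top.extremum_strict)
    have "eventually (\<lambda>m. F r - (F r - z') < G m r) sequentially" using z' by (intro below) simp
    then show "eventually (\<lambda>m. z < ennreal (G m r)) sequentially"
      by eventually_elim (use z' in \<open>auto simp: ennreal_less_iff\<close>)
  qed
  then have "(\<integral>\<^sup>+ r. ennreal (F r) \<partial>lborel) \<le> (\<integral>\<^sup>+ r. liminf (\<lambda>m. ennreal (G m r)) \<partial>lborel)"
    by (intro nn_integral_mono)
  also have "\<dots> \<le> liminf (\<lambda>m. \<integral>\<^sup>+ r. ennreal (G m r) \<partial>lborel)"
    by (rule nn_integral_liminf) measurable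
  finally have "ennreal (LINT r|lborel. F r) \<le> liminf (\<lambda>m. ennreal (LINT r|lborel. G m r))"
    using F_int F_nonneg G_int G_nonneg by (simp add: nn_integral_eq_integral)
  moreover have "ennreal y < ennreal (LINT r|lborel. F r)" using False y by (simp add: ennreal_less_iff)
  ultimately have "eventually (\<lambda>m. ennreal y < ennreal (LINT r|lborel. G m r)) sequentially"
    unfolding le_Liminf_iff by (meson less_le_trans)
  then show ?thesis
    by eventually_elim (use False in \<open>auto simp: ennreal_less_iff\<close>)
qed

lemma reverse_fatou_eventually_less:
  fixes G :: "nat \<Rightarrow> real \<Rightarrow> real" and F D :: "real \<Rightarrow> real"
  assumes G_le: "\<And>m r. G m r \<le> D r" and F_le: "\<And>r. F r \<le> D r"
    and G_int: "\<And>m. integrable lborel (G m)" and F_int: "integrable lborel F" and D_int: "integrable lborel D"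
    and above: "\<And>r \<delta>. 0 < \<delta> \<Longrightarrow> eventually (\<lambda>m. G m r < F r + \<delta>) sequentially"
    and y: "(LINT r|lborel. F r) < y"
  shows "eventually (\<lambda>m. (LINT r|lborel. G m r) < y) sequentially"
proof -
  have "eventually (\<lambda>m. (LINT r|lborel. D r) - y < (LINT r|lborel. D r - G m r)) sequentially"
  proof (rule fatou_eventually_less[where F="\<lambda>r. D r - F r"])
    show "eventually (\<lambda>m. D r - F r - \<delta> < D r - G m r) sequentially" if "0 < \<delta>" for r \<delta>
      using above[OF that, of r] by eventually_elim simp
  qed (use assms in auto)
  then show ?thesis using D_int G_int by simp
qed

lemma real_liminf_bounded:
  fixes x :: "nat \<Rightarrow> real"
  assumes "\<And>m. a \<le> x m" "\<And>m. x m \<le> b"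
  shows "a \<le> real_of_ereal (liminf (\<lambda>m. ereal (x m)))"
    and "real_of_ereal (liminf (\<lambda>m. ereal (x m))) \<le> b"
    and "0 < \<delta> \<Longrightarrow> eventually (\<lambda>m. real_of_ereal (liminf (\<lambda>m. ereal (x m))) - \<delta> < x m) sequentially"
proof -
  let ?L = "liminf (\<lambda>m. ereal (x m))"
  have lower: "ereal a \<le> ?L" using assms by (intro Liminf_bounded) auto
  have "?L \<le> limsup (\<lambda>m. ereal (x m))" by (rule Liminf_le_Limsup) simp
  also have "\<dots> \<le> ereal b" using assms by (intro Limsup_bounded) auto
  finally have upper: "?L \<le> ereal b" .
  then have L: "ereal (real_of_ereal ?L) = ?L" using lower by (cases ?L) auto
  then show "a \<le> real_of_ereal ?L" "real_of_ereal ?L \<le> b"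
    using lower upper by (simp_all only: ereal_less_eq(3)[symmetric])
  assume "0 < \<delta>"
  then have "ereal (real_of_ereal ?L - \<delta>) < ereal (real_of_ereal ?L)" by simp
  then have "ereal (real_of_ereal ?L - \<delta>) < ?L" using L by simp
  then show "eventually (\<lambda>m. real_of_ereal ?L - \<delta> < x m) sequentially"
    by (auto dest: less_LiminfD)
qed

lemma real_limsup_bounded:
  fixes x :: "nat \<Rightarrow> real"
  assumes "\<And>m. a \<le> x m" "\<And>m. x m \<le> b"
  shows "a \<le> real_of_ereal (limsup (\<lambda>m. ereal (x m)))"
    and "real_of_ereal (limsup (\<lambda>m. ereal (x m))) \<le> b"
    and "0 < \<delta> \<Longrightarrow> eventually (\<lambda>m. x m < real_of_ereal (limsup (\<lambda>m. ereal (x m))) + \<delta>) sequentially"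
proof -
  have "limsup (\<lambda>m. ereal (x m)) = - liminf (\<lambda>m. ereal (- x m))"
    using ereal_Limsup_uminus[of sequentially "\<lambda>m. ereal (- x m)"] by simp
  then have L: "real_of_ereal (limsup (\<lambda>m. ereal (x m))) = - real_of_ereal (liminf (\<lambda>m. ereal (- x m)))"
    by simp
  have "- b \<le> - x m" "- x m \<le> - a" for m using assms by auto
  note bounds = real_liminf_bounded[of "- b" "\<lambda>m. - x m" "- a", OF this]
  show "a \<le> real_of_ereal (limsup (\<lambda>m. ereal (x m)))" "real_of_ereal (limsup (\<lambda>m. ereal (x m))) \<le> b"
    unfolding L using bounds(1,2) by linarith+
  show "eventually (\<lambda>m. x m < real_of_ereal (limsup (\<lambda>m. ereal (x m))) + \<delta>) sequentially" if "0 < \<delta>"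
    unfolding L using bounds(3)[OF that] by eventually_elim linarith
qed

lemma integrable_exp_halfline:
  fixes lam t :: real
  assumes "lam < 0"
  shows "integrable lborel (\<lambda>r. indicator {..t} r * exp (lam * (t - r)))"
proof -
  define l where "l = - lam"
  have l: "0 < l" using assms by (simp add: l_def)
  have [measurable]: "exponential_density l \<in> borel_measurable borel"
    unfolding exponential_density_def by measurable
  have "(\<integral>\<^sup>+ x. ennreal (exponential_density l x) \<partial>lborel) = 1"
    using prob_space.emeasure_space_1[OF prob_space_exponential_density[OF l]] by (simp add: emeasure_density)
  then have "integrable lborel (exponential_density l)"
    by (intro integrableI_nonneg) (auto simp: exponential_density_nonneg[OF l])
  then have "integrable lborel (\<lambda>r. exponential_density l (t + (-1) * r))"
    by (rule lborel_integrable_real_affine) simp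
  then have "integrable lborel (\<lambda>r. (1 / l) * exponential_density l (t + (-1) * r))"
    by (rule integrable_mult_right)
  moreover have "(\<lambda>r. (1 / l) * exponential_density l (t + (-1) * r)) = (\<lambda>r. indicator {..t} r * exp (lam * (t - r)))"
    using l by (auto simp: fun_eq_iff exponential_density_def l_def indicator_def algebra_simps)
  ultimately show ?thesis by simp
qed

lemma eventually_pullback_time_le:
  assumes "0 < T"
  shows "eventually (\<lambda>m::nat. - (real m * T) \<le> r) sequentially"
proof -
  obtain N :: nat where N: "- r < real N * T" using ex_less_of_nat_mult[OF assms] by blast
  show ?thesis
  proof (rule eventually_sequentiallyI[of N])
    fix m assume "N \<le> m"
    then have "real N * T \<le> real m * T" using assms by (intro mult_right_mono) auto
    then show "- (real m * T) \<le> r" using N by linarith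
  qed
qed

lemma continuous_on_along_path:
  fixes h :: "real \<Rightarrow> 'b::topological_space \<Rightarrow> 'c::topological_space"
  assumes "continuous_on UNIV (\<lambda>(t, y). h t y)" and "continuous_on S p"
  shows "continuous_on S (\<lambda>r. h r (p r))"
proof -
  have "continuous_on S ((\<lambda>(t, y). h t y) \<circ> (\<lambda>r. (r, p r)))"
    by (intro continuous_on_compose continuous_intros assms(2)) (rule continuous_on_subset[OF assms(1)], simp)
  then show ?thesis by (simp add: comp_def)
qed

lemma borel_measurable_liminf_limsup_along_pullback:
  fixes h :: "real \<Rightarrow> real^'d \<Rightarrow> real^'d" and \<psi> :: "nat \<Rightarrow> real \<Rightarrow> real^'d"
  assumes h: "continuous_on UNIV (\<lambda>(t, y). h t y)" and T: "0 < T"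
    and \<psi>: "\<And>m. continuous_on {- (real m * T)..} (\<psi> m)"
  shows "(\<lambda>r. real_of_ereal (liminf (\<lambda>m. ereal (h r (\<psi> m r) $ j)))) \<in> borel_measurable borel"
    and "(\<lambda>r. real_of_ereal (limsup (\<lambda>m. ereal (h r (\<psi> m r) $ j)))) \<in> borel_measurable borel"
proof -
  define g where "g = (\<lambda>m r. indicator {- (real m * T)..} r * h r (\<psi> m r) $ j)"
  have "g m \<in> borel_measurable borel" for m
    using borel_measurable_continuous_on_indicator[OF _ continuous_on_component[OF continuous_on_along_path[OF h \<psi>]]]
    unfolding g_def by simp
  then have "(\<lambda>r. ereal (g m r)) \<in> borel_measurable borel" for m by measurable
  note g_meas = borel_measurable_liminf[OF this] borel_measurable_limsup[OF this]
  have "eventually (\<lambda>m. ereal (h r (\<psi> m r) $ j) = ereal (g m r)) sequentially" for r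
    using eventually_pullback_time_le[OF T, of r] by eventually_elim (simp add: g_def)
  then have "liminf (\<lambda>m. ereal (h r (\<psi> m r) $ j)) = liminf (\<lambda>m. ereal (g m r))"
    and "limsup (\<lambda>m. ereal (h r (\<psi> m r) $ j)) = limsup (\<lambda>m. ereal (g m r))" for r
    by (auto intro: Liminf_eq Limsup_eq)
  then show "(\<lambda>r. real_of_ereal (liminf (\<lambda>m. ereal (h r (\<psi> m r) $ j)))) \<in> borel_measurable borel"
    and "(\<lambda>r. real_of_ereal (limsup (\<lambda>m. ereal (h r (\<psi> m r) $ j)))) \<in> borel_measurable borel"
    using g_meas by (simp_all add: borel_measurable_real_of_ereal)
qed

lemma eventually_sum_mult_greater:
  fixes c l :: "'j::finite \<Rightarrow> real" and x :: "'j \<Rightarrow> nat \<Rightarrow> real"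
  assumes c: "\<And>j. 0 \<le> c j" and below: "\<And>j \<delta>. 0 < \<delta> \<Longrightarrow> eventually (\<lambda>m. l j - \<delta> < x j m) sequentially"
    and "0 < \<eta>"
  shows "eventually (\<lambda>m. (\<Sum>j\<in>UNIV. c j * l j) - \<eta> < (\<Sum>j\<in>UNIV. c j * x j m)) sequentially"
proof -
  define \<epsilon> where "\<epsilon> = \<eta> / real CARD('j)"
  have "0 < \<epsilon>" using \<open>0 < \<eta>\<close> by (simp add: \<epsilon>_def)
  have "eventually (\<lambda>m. c j * l j - \<epsilon> < c j * x j m) sequentially" for j
  proof (cases "c j = 0")
    case False
    then have "0 < c j" using c[of j] by simp
    have "eventually (\<lambda>m. l j - \<epsilon> / c j < x j m) sequentially"
      using \<open>0 < c j\<close> \<open>0 < \<epsilon>\<close> by (intro below) simp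
    then show ?thesis
      by eventually_elim (use \<open>0 < c j\<close> in \<open>simp add: field_simps\<close>)
  qed (use \<open>0 < \<epsilon>\<close> in simp)
  then have "eventually (\<lambda>m. \<forall>j. c j * l j - \<epsilon> < c j * x j m) sequentially"
    by (rule eventually_all_finite)
  then show ?thesis
  proof eventually_elim
    case (elim m)
    then have "(\<Sum>j\<in>(UNIV::'j set). c j * l j - \<epsilon>) < (\<Sum>j\<in>UNIV. c j * x j m)"
      by (intro sum_strict_mono) auto
    then show ?case by (simp add: sum_subtractf \<epsilon>_def)
  qed
qed

lemma eventually_sum_mult_less:
  fixes c l :: "'j::finite \<Rightarrow> real" and x :: "'j \<Rightarrow> nat \<Rightarrow> real"
  assumes c: "\<And>j. 0 \<le> c j" and above: "\<And>j \<delta>. 0 < \<delta> \<Longrightarrow> eventually (\<lambda>m. x j m < l j + \<delta>) sequentially"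
    and "0 < \<eta>"
  shows "eventually (\<lambda>m. (\<Sum>j\<in>UNIV. c j * x j m) < (\<Sum>j\<in>UNIV. c j * l j) + \<eta>) sequentially"
proof -
  have below: "eventually (\<lambda>m. - l j - \<delta> < - x j m) sequentially" if "0 < \<delta>" for j \<delta>
    using above[OF that, of j] by eventually_elim simp
  have "eventually (\<lambda>m. (\<Sum>j\<in>UNIV. c j * - l j) - \<eta> < (\<Sum>j\<in>UNIV. c j * - x j m)) sequentially"
    by (intro eventually_sum_mult_greater c below \<open>0 < \<eta>\<close>)
  then show ?thesis by eventually_elim (simp add: sum_negf)
qed

lemma ereal_le_liminf_if_eventually_greater:
  assumes "\<And>y. y < c \<Longrightarrow> eventually (\<lambda>m. y < x m) sequentially"
  shows "ereal c \<le> liminf (\<lambda>m. ereal (x m))"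
proof (unfold le_Liminf_iff, intro allI impI)
  fix y :: ereal assume "y < ereal c"
  then show "eventually (\<lambda>m. y < ereal (x m)) sequentially"
    using assms by (cases y) auto
qed

lemma limsup_le_ereal_if_eventually_less:
  assumes "\<And>y. c < y \<Longrightarrow> eventually (\<lambda>m. x m < y) sequentially"
  shows "limsup (\<lambda>m. ereal (x m)) \<le> ereal c"
proof (unfold Limsup_le_iff, intro allI impI)
  fix y :: ereal assume "ereal c < y"
  then show "eventually (\<lambda>m. ereal (x m) < y) sequentially"
    using assms by (cases y) auto
qed

definition liminf_vec :: "(nat \<Rightarrow> real^'n) \<Rightarrow> real^'n" where
  "liminf_vec x = (\<chi> j. real_of_ereal (liminf (\<lambda>m. ereal (x m $ j))))"

definition limsup_vec :: "(nat \<Rightarrow> real^'n) \<Rightarrow> real^'n" where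
  "limsup_vec x = (\<chi> j. real_of_ereal (limsup (\<lambda>m. ereal (x m $ j))))"

context
  fixes A :: "real^'d^'d" and h :: "real \<Rightarrow> real^'d \<Rightarrow> real^'d" and \<psi> :: "nat \<Rightarrow> real \<Rightarrow> real^'d"
    and T t lam B :: real
  assumes lam: "lam < 0"
    and Phi: "\<And>\<tau>. 0 \<le> \<tau> \<Longrightarrow> mnorm (mexp (\<tau> *\<^sub>R A)) \<le> exp (lam * \<tau>)"
    and Phi_nonneg: "\<And>\<tau> k l. 0 \<le> \<tau> \<Longrightarrow> 0 \<le> mexp (\<tau> *\<^sub>R A) $ k $ l"
    and h_cont: "continuous_on UNIV (\<lambda>(t, y). h t y)"
    and h_nonneg: "\<And>s y j. 0 \<le> h s y $ j" and h_le: "\<And>s y j. h s y $ j \<le> B"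
    and T: "0 < T"
    and \<psi>_cont: "\<And>m. continuous_on {- (real m * T)..} (\<psi> m)"
begin

lemma Phi_mult_component_bounds:
  assumes "r \<le> t" and v: "\<And>j. 0 \<le> v $ j" "\<And>j. v $ j \<le> B"
  shows "0 \<le> (mexp ((t - r) *\<^sub>R A) *v v) $ i"
    and "(mexp ((t - r) *\<^sub>R A) *v v) $ i \<le> real CARD('d) * B * exp (lam * (t - r))"
proof -
  have Phi_entry: "0 \<le> mexp ((t - r) *\<^sub>R A) $ i $ j" "mexp ((t - r) *\<^sub>R A) $ i $ j \<le> exp (lam * (t - r))" for j
    using Phi_nonneg[of "t - r"] abs_entry_le_mnorm[of "mexp ((t - r) *\<^sub>R A)" i j] Phi[of "t - r"] \<open>r \<le> t\<close>
    by auto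
  show "0 \<le> (mexp ((t - r) *\<^sub>R A) *v v) $ i"
    unfolding matrix_vector_mult_def using Phi_entry v by (auto intro!: sum_nonneg)
  have "(mexp ((t - r) *\<^sub>R A) *v v) $ i = (\<Sum>j\<in>UNIV. mexp ((t - r) *\<^sub>R A) $ i $ j * v $ j)"
    by (simp add: matrix_vector_mult_def)
  also have "\<dots> \<le> (\<Sum>j\<in>(UNIV::'d set). exp (lam * (t - r)) * B)"
    by (intro sum_mono mult_mono) (use Phi_entry v in auto)
  finally show "(mexp ((t - r) *\<^sub>R A) *v v) $ i \<le> real CARD('d) * B * exp (lam * (t - r))"
    by (simp add: mult_ac)
qed

lemma liminf_along_pullback:
  "0 \<le> liminf_vec (\<lambda>m. h r (\<psi> m r)) $ j" "liminf_vec (\<lambda>m. h r (\<psi> m r)) $ j \<le> B"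
  "0 < \<delta> \<Longrightarrow> eventually (\<lambda>m. liminf_vec (\<lambda>m. h r (\<psi> m r)) $ j - \<delta> < h r (\<psi> m r) $ j) sequentially"
  using real_liminf_bounded[of 0 "\<lambda>m. h r (\<psi> m r) $ j" B] h_nonneg h_le by (simp_all add: liminf_vec_def)

lemma limsup_along_pullback:
  "0 \<le> limsup_vec (\<lambda>m. h r (\<psi> m r)) $ j" "limsup_vec (\<lambda>m. h r (\<psi> m r)) $ j \<le> B"
  "0 < \<delta> \<Longrightarrow> eventually (\<lambda>m. h r (\<psi> m r) $ j < limsup_vec (\<lambda>m. h r (\<psi> m r)) $ j + \<delta>) sequentially"
  using real_limsup_bounded[of 0 "\<lambda>m. h r (\<psi> m r) $ j" B] h_nonneg h_le by (simp_all add: limsup_vec_def)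

lemma borel_measurable_liminf_limsup_vec_along_pullback:
  "(\<lambda>r. liminf_vec (\<lambda>m. h r (\<psi> m r)) $ j) \<in> borel_measurable borel"
  "(\<lambda>r. limsup_vec (\<lambda>m. h r (\<psi> m r)) $ j) \<in> borel_measurable borel"
  using borel_measurable_liminf_limsup_along_pullback[OF h_cont T \<psi>_cont, of j]
  by (simp_all add: liminf_vec_def limsup_vec_def)

lemma set_integrable_Phi_mult:
  assumes u_meas: "\<And>j. (\<lambda>r. u r $ j) \<in> borel_measurable borel"
    and u: "\<And>r j. 0 \<le> u r $ j" "\<And>r j. u r $ j \<le> B"
  shows "integrable lborel (\<lambda>r. indicator {..t} r *\<^sub>R (mexp ((t - r) *\<^sub>R A) *v u r))"
proof -
  have [measurable]: "(\<lambda>r. u r $ j) \<in> borel_measurable borel" for j by (rule u_meas)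
  have [measurable]: "(\<lambda>r. (\<chi> k. mexp ((t - r) *\<^sub>R A) $ k $ j)) \<in> borel_measurable borel" for j
    by (intro borel_measurable_continuous_onI continuous_on_vec_lambda continuous_on_component
        continuous_on_mexp_backward)
  have "mexp ((t - r) *\<^sub>R A) *v u r = (\<Sum>j\<in>UNIV. (u r $ j) *\<^sub>R (\<chi> k. mexp ((t - r) *\<^sub>R A) $ k $ j))" for r
    by (simp add: vec_eq_iff matrix_vector_mult_def sum_component mult.commute)
  then have meas: "(\<lambda>r. indicator {..t} r *\<^sub>R (mexp ((t - r) *\<^sub>R A) *v u r)) \<in> borel_measurable lborel"
    by simp
  have bound: "norm (indicator {..t} r *\<^sub>R (mexp ((t - r) *\<^sub>R A) *v u r))
      \<le> real CARD('d) * (real CARD('d) * B) * (indicator {..t} r * exp (lam * (t - r)))" for r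
  proof (cases "r \<le> t")
    case True
    have "norm (mexp ((t - r) *\<^sub>R A) *v u r) \<le> (\<Sum>k\<in>UNIV. \<bar>(mexp ((t - r) *\<^sub>R A) *v u r) $ k\<bar>)"
      by (rule norm_le_l1_cart)
    also have "\<dots> \<le> (\<Sum>k\<in>(UNIV::'d set). real CARD('d) * B * exp (lam * (t - r)))"
      using Phi_mult_component_bounds[OF True u] by (intro sum_mono) simp
    finally show ?thesis using True by (simp add: mult_ac)
  qed simp
  have dom: "integrable lborel (\<lambda>r. real CARD('d) * (real CARD('d) * B) * (indicator {..t} r * exp (lam * (t - r))))"
    using integrable_exp_halfline[OF lam, of t] by simp
  have "AE r in lborel. norm (indicator {..t} r *\<^sub>R (mexp ((t - r) *\<^sub>R A) *v u r))
      \<le> norm (real CARD('d) * (real CARD('d) * B) * (indicator {..t} r * exp (lam * (t - r))))"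
    by (intro AE_I2 order_trans[OF bound]) simp
  then show ?thesis by (rule Bochner_Integration.integrable_bound[OF dom meas])
qed

lemma set_integral_Phi_mult_component:
  assumes "integrable lborel (\<lambda>r. indicator {..t} r *\<^sub>R (mexp ((t - r) *\<^sub>R A) *v u r))"
  shows "(LINT r:{..t}|lborel. mexp ((t - r) *\<^sub>R A) *v u r) $ i
    = (LINT r|lborel. indicator {..t} r * (mexp ((t - r) *\<^sub>R A) *v u r) $ i)"
  unfolding set_lebesgue_integral_def
  using integral_bounded_linear[OF bounded_linear_vec_nth assms, of i] by simp

definition pullback_integrand :: "nat \<Rightarrow> 'd \<Rightarrow> real \<Rightarrow> real" where
  "pullback_integrand m i r = indicator {- (real m * T)..t} r * (mexp ((t - r) *\<^sub>R A) *v h r (\<psi> m r)) $ i"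

lemma pullback_integrand:
  "integrable lborel (pullback_integrand m i)"
  "integral {- (real m * T)..t} (\<lambda>r. mexp ((t - r) *\<^sub>R A) *v h r (\<psi> m r)) $ i = (LINT r|lborel. pullback_integrand m i r)"
  "0 \<le> pullback_integrand m i r"
  "pullback_integrand m i r \<le> indicator {..t} r * (real CARD('d) * B * exp (lam * (t - r)))"
proof -
  let ?F = "\<lambda>r. mexp ((t - r) *\<^sub>R A) *v h r (\<psi> m r)"
  have "continuous_on {- (real m * T)..t} (\<lambda>r. h r (\<psi> m r))"
    by (intro continuous_on_along_path[OF h_cont] continuous_on_subset[OF \<psi>_cont]) auto
  then have F_cont: "continuous_on {- (real m * T)..t} ?F"
    by (intro continuous_on_matrix_vector_mult continuous_on_mexp_backward)
  have F_int: "set_integrable lborel {- (real m * T)..t} (\<lambda>r. ?F r $ i)"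
    unfolding set_integrable_def
    using borel_integrable_compact[OF compact_Icc continuous_on_component[OF F_cont]] by simp
  then show "integrable lborel (pullback_integrand m i)"
    unfolding set_integrable_def pullback_integrand_def by (simp add: fun_eq_iff)
  have "integral {- (real m * T)..t} ?F $ i = integral {- (real m * T)..t} (\<lambda>r. ?F r $ i)"
    by (rule integral_component_eq_cart[symmetric]) (rule integrable_continuous_interval[OF F_cont])
  also have "\<dots> = (LINT r|lborel. pullback_integrand m i r)"
    unfolding set_borel_integral_eq_integral(2)[OF F_int, symmetric] set_lebesgue_integral_def
      pullback_integrand_def by simp
  finally show "integral {- (real m * T)..t} ?F $ i = (LINT r|lborel. pullback_integrand m i r)" .
  show "0 \<le> pullback_integrand m i r" "pullback_integrand m i r \<le> indicator {..t} r * (real CARD('d) * B * exp (lam * (t - r)))"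
    using Phi_mult_component_bounds[of r "h r (\<psi> m r)" i] h_nonneg h_le order_trans[OF h_nonneg h_le]
    by (auto simp: pullback_integrand_def indicator_def)
qed

lemma pullback_integrand_eq:
  "- (real m * T) \<le> r \<Longrightarrow> r \<le> t \<Longrightarrow> pullback_integrand m i r = (mexp ((t - r) *\<^sub>R A) *v h r (\<psi> m r)) $ i"
  by (simp add: pullback_integrand_def)

lemma pullback_integrand_eq_0: "t < r \<Longrightarrow> pullback_integrand m i r = 0"
  by (simp add: pullback_integrand_def)

lemma liminf_pullback_integral:
  "ereal ((LINT r:{..t}|lborel. mexp ((t - r) *\<^sub>R A) *v liminf_vec (\<lambda>m. h r (\<psi> m r))) $ i)
    \<le> liminf (\<lambda>m. ereal (integral {- (real m * T)..t} (\<lambda>r. mexp ((t - r) *\<^sub>R A) *v h r (\<psi> m r)) $ i))"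
proof (rule ereal_le_liminf_if_eventually_greater)
  let ?u = "\<lambda>r. liminf_vec (\<lambda>m. h r (\<psi> m r))"
  let ?F = "\<lambda>r. indicator {..t} r * (mexp ((t - r) *\<^sub>R A) *v ?u r) $ i"
  fix y assume y: "y < (LINT r:{..t}|lborel. mexp ((t - r) *\<^sub>R A) *v ?u r) $ i"
  have u_int: "integrable lborel (\<lambda>r. indicator {..t} r *\<^sub>R (mexp ((t - r) *\<^sub>R A) *v ?u r))"
    using borel_measurable_liminf_limsup_vec_along_pullback(1) liminf_along_pullback(1,2)
    by (rule set_integrable_Phi_mult)
  have "integrable lborel ?F"
    using integrable_bounded_linear[OF bounded_linear_vec_nth u_int, of i] by simp
  moreover have "0 \<le> ?F r" for r
    using Phi_mult_component_bounds(1)[of r "?u r"] liminf_along_pullback(1,2) by (simp add: indicator_def)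
  moreover have "eventually (\<lambda>m. ?F r - \<delta> < pullback_integrand m i r) sequentially" if "0 < \<delta>" for r \<delta>
  proof (cases "r \<le> t")
    case True
    have "eventually (\<lambda>m. (\<Sum>j\<in>UNIV. mexp ((t - r) *\<^sub>R A) $ i $ j * ?u r $ j) - \<delta>
        < (\<Sum>j\<in>UNIV. mexp ((t - r) *\<^sub>R A) $ i $ j * h r (\<psi> m r) $ j)) sequentially"
      using True that by (intro eventually_sum_mult_greater Phi_nonneg liminf_along_pullback(3)) simp_all
    with eventually_pullback_time_le[OF T, of r] show ?thesis
      by eventually_elim (use True in \<open>simp add: pullback_integrand_eq matrix_vector_mult_def\<close>)
  qed (use that in \<open>simp add: pullback_integrand_eq_0\<close>)
  ultimately have "eventually (\<lambda>m. y < (LINT r|lborel. pullback_integrand m i r)) sequentially"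
    using y set_integral_Phi_mult_component[OF u_int]
    by (intro fatou_eventually_less[OF pullback_integrand(3,1)]) simp_all
  then show "eventually (\<lambda>m. y < integral {- (real m * T)..t} (\<lambda>r. mexp ((t - r) *\<^sub>R A) *v h r (\<psi> m r)) $ i) sequentially"
    by (simp add: pullback_integrand(2))
qed

lemma limsup_pullback_integral:
  "limsup (\<lambda>m. ereal (integral {- (real m * T)..t} (\<lambda>r. mexp ((t - r) *\<^sub>R A) *v h r (\<psi> m r)) $ i))
    \<le> ereal ((LINT r:{..t}|lborel. mexp ((t - r) *\<^sub>R A) *v limsup_vec (\<lambda>m. h r (\<psi> m r))) $ i)"
proof (rule limsup_le_ereal_if_eventually_less)
  let ?u = "\<lambda>r. limsup_vec (\<lambda>m. h r (\<psi> m r))"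
  let ?F = "\<lambda>r. indicator {..t} r * (mexp ((t - r) *\<^sub>R A) *v ?u r) $ i"
  let ?D = "\<lambda>r. indicator {..t} r * (real CARD('d) * B * exp (lam * (t - r)))"
  fix y assume y: "(LINT r:{..t}|lborel. mexp ((t - r) *\<^sub>R A) *v ?u r) $ i < y"
  have u_int: "integrable lborel (\<lambda>r. indicator {..t} r *\<^sub>R (mexp ((t - r) *\<^sub>R A) *v ?u r))"
    using borel_measurable_liminf_limsup_vec_along_pullback(2) limsup_along_pullback(1,2)
    by (rule set_integrable_Phi_mult)
  have "integrable lborel ?F"
    using integrable_bounded_linear[OF bounded_linear_vec_nth u_int, of i] by simp
  moreover have "integrable lborel ?D"
    using integrable_mult_right[OF integrable_exp_halfline[OF lam, of t], of "real CARD('d) * B"]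
    by (simp add: mult_ac)
  moreover have "?F r \<le> ?D r" for r
    using Phi_mult_component_bounds(2)[of r "?u r"] limsup_along_pullback(1,2) by (simp add: indicator_def)
  moreover have "eventually (\<lambda>m. pullback_integrand m i r < ?F r + \<delta>) sequentially" if "0 < \<delta>" for r \<delta>
  proof (cases "r \<le> t")
    case True
    have "eventually (\<lambda>m. (\<Sum>j\<in>UNIV. mexp ((t - r) *\<^sub>R A) $ i $ j * h r (\<psi> m r) $ j)
        < (\<Sum>j\<in>UNIV. mexp ((t - r) *\<^sub>R A) $ i $ j * ?u r $ j) + \<delta>) sequentially"
      using True that by (intro eventually_sum_mult_less Phi_nonneg limsup_along_pullback(3)) simp_all
    with eventually_pullback_time_le[OF T, of r] show ?thesis
      by eventually_elim (use True in \<open>simp add: pullback_integrand_eq matrix_vector_mult_def\<close>)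
  qed (use that in \<open>simp add: pullback_integrand_eq_0\<close>)
  ultimately have "eventually (\<lambda>m. (LINT r|lborel. pullback_integrand m i r) < y) sequentially"
    using y set_integral_Phi_mult_component[OF u_int]
    by (intro reverse_fatou_eventually_less[OF pullback_integrand(4) _ pullback_integrand(1)]) simp_all
  then show "eventually (\<lambda>m. integral {- (real m * T)..t} (\<lambda>r. mexp ((t - r) *\<^sub>R A) *v h r (\<psi> m r)) $ i < y) sequentially"
    by (simp add: pullback_integrand(2))
qed

lemma pullback_initial_term_tendsto_0:
  "(\<lambda>m::nat. (mexp ((t - - (real m * T)) *\<^sub>R A) *v x) $ i) \<longlonglongrightarrow> 0"
proof (rule Lim_null_comparison)
  let ?c = "(\<Sum>j\<in>UNIV. \<bar>x $ j\<bar>) * exp (lam * t)"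
  show "(\<lambda>m::nat. ?c * exp (lam * T) ^ m) \<longlonglongrightarrow> 0"
    using lam T by (intro tendsto_mult_right_zero LIMSEQ_power_zero) (simp_all add: mult_neg_pos)
  show "eventually (\<lambda>m. norm ((mexp ((t - - (real m * T)) *\<^sub>R A) *v x) $ i) \<le> ?c * exp (lam * T) ^ m) sequentially"
    using eventually_pullback_time_le[OF T, of t]
  proof eventually_elim
    case (elim m)
    have "\<bar>mexp ((t + real m * T) *\<^sub>R A) $ i $ j\<bar> \<le> exp (lam * (t + real m * T))" for j
      using abs_entry_le_mnorm[of "mexp ((t + real m * T) *\<^sub>R A)" i j] Phi[of "t + real m * T"] elim by simp
    then have "norm ((mexp ((t - - (real m * T)) *\<^sub>R A) *v x) $ i) \<le> (\<Sum>j\<in>UNIV. exp (lam * (t + real m * T)) * \<bar>x $ j\<bar>)"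
      unfolding matrix_vector_mult_def
      by (auto intro!: order_trans[OF sum_abs] sum_mono simp: abs_mult mult_right_mono)
    also have "exp (lam * (t + real m * T)) = exp (lam * t) * exp (lam * T) ^ m"
      by (simp add: exp_add[symmetric] exp_of_nat_mult[symmetric] algebra_simps)
    finally show ?case by (simp add: sum_distrib_left sum_distrib_right mult_ac)
  qed
qed

lemma pullback_liminf_limsup_bounds:
  fixes a J :: "nat \<Rightarrow> real^'d"
  assumes a: "\<forall>m. - (real m * T) \<le> t \<longrightarrow> a m = mexp ((t - - (real m * T)) *\<^sub>R A) *v x
      + integral {- (real m * T)..t} (\<lambda>r. mexp ((t - r) *\<^sub>R A) *v h r (\<psi> m r)) + J m"
    and J: "J \<longlonglongrightarrow> z"
  shows "ereal ((LINT r:{..t}|lborel. mexp ((t - r) *\<^sub>R A) *v liminf_vec (\<lambda>m. h r (\<psi> m r))) $ i + z $ i)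
      \<le> liminf (\<lambda>m. ereal (a m $ i))"
    and "limsup (\<lambda>m. ereal (a m $ i))
      \<le> ereal ((LINT r:{..t}|lborel. mexp ((t - r) *\<^sub>R A) *v limsup_vec (\<lambda>m. h r (\<psi> m r))) $ i + z $ i)"
proof -
  let ?H = "\<lambda>m. integral {- (real m * T)..t} (\<lambda>r. mexp ((t - r) *\<^sub>R A) *v h r (\<psi> m r)) $ i"
  let ?b = "\<lambda>m. (mexp ((t - - (real m * T)) *\<^sub>R A) *v x) $ i + J m $ i"
  have "?b \<longlonglongrightarrow> 0 + z $ i"
    by (intro tendsto_add pullback_initial_term_tendsto_0 tendsto_vec_nth J)
  then have b: "(\<lambda>m. ereal (?b m)) \<longlonglongrightarrow> ereal (z $ i)" by simp
  have a_eq: "eventually (\<lambda>m. ereal (a m $ i) = ereal (?b m) + ereal (?H m)) sequentially"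
    using eventually_pullback_time_le[OF T, of t] by eventually_elim (simp add: a)
  have "liminf (\<lambda>m. ereal (a m $ i)) = liminf (\<lambda>m. ereal (?b m) + ereal (?H m))"
    using a_eq by (rule Liminf_eq)
  also have "\<dots> = ereal (z $ i) + liminf (\<lambda>m. ereal (?H m))"
    by (rule ereal_liminf_lim_add[OF b]) simp
  finally have liminf_a: "liminf (\<lambda>m. ereal (a m $ i)) = ereal (z $ i) + liminf (\<lambda>m. ereal (?H m))" .
  have "limsup (\<lambda>m. ereal (a m $ i)) = limsup (\<lambda>m. ereal (?b m) + ereal (?H m))"
    using a_eq by (rule Limsup_eq)
  also have "\<dots> = ereal (z $ i) + limsup (\<lambda>m. ereal (?H m))"
    by (rule ereal_limsup_lim_add[OF b]) simp
  finally have "limsup (\<lambda>m. ereal (a m $ i)) = ereal (z $ i) + limsup (\<lambda>m. ereal (?H m))" .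
  note liminf_a this
  then show "ereal ((LINT r:{..t}|lborel. mexp ((t - r) *\<^sub>R A) *v liminf_vec (\<lambda>m. h r (\<psi> m r))) $ i + z $ i)
      \<le> liminf (\<lambda>m. ereal (a m $ i))"
    and "limsup (\<lambda>m. ereal (a m $ i))
      \<le> ereal ((LINT r:{..t}|lborel. mexp ((t - r) *\<^sub>R A) *v limsup_vec (\<lambda>m. h r (\<psi> m r))) $ i + z $ i)"
    using add_left_mono[OF liminf_pullback_integral, of "ereal (z $ i)" i]
      add_left_mono[OF limsup_pullback_integral, of "ereal (z $ i)" i]
    by (simp_all add: add.commute)
qed

end

lemma assumption_A_imp:
  assumes "assumption_A (A::real^'n^'n)"
  obtains lam where "lam < 0" and "\<And>\<tau>. 0 \<le> \<tau> \<Longrightarrow> mnorm (mexp (\<tau> *\<^sub>R A)) \<le> exp (lam * \<tau>)"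
    and "\<And>\<tau> k l. 0 \<le> \<tau> \<Longrightarrow> 0 \<le> mexp (\<tau> *\<^sub>R A) $ k $ l"
proof -
  note A = assms[unfolded assumption_A_def]
  obtain lam where "lam < 0" and "\<forall>\<tau>\<ge>0. mnorm (mexp (\<tau> *\<^sub>R A)) \<le> exp (lam * \<tau>)"
    using conjunct2[OF A] by blast
  moreover have "0 \<le> mexp (\<tau> *\<^sub>R A) $ k $ l" if "0 \<le> \<tau>" for \<tau> k l
    using conjunct1[OF A] that by (intro mexp_nonneg_if_Metzler) simp
  ultimately show ?thesis using that by blast
qed

lemma assumption_H1_imp:
  assumes "assumption_H1 h"
  obtains B where "continuous_on UNIV (\<lambda>(t, y). h t y)"
    and "\<And>s y j. 0 \<le> h s y $ j" and "\<And>s y j. h s y $ j \<le> B"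
proof -
  note H1 = assms[unfolded assumption_H1_def]
  obtain D where "\<forall>z. ((\<lambda>(t, y). h t y) has_derivative blinfun_apply (D z)) (at z)"
    using conjunct1[OF H1] by blast
  then have "continuous_on UNIV (\<lambda>(t, y). h t y)"
    by (intro continuous_at_imp_continuous_on) (blast intro: has_derivative_continuous)
  moreover have "0 \<le> h s y $ j" for s y j
    using conjunct1[OF conjunct2[OF conjunct2[OF H1]]] by (simp add: less_eq_vec_def)
  moreover obtain B where B: "\<forall>z\<in>range (\<lambda>(t, y). h t y). norm z \<le> B"
    using conjunct1[OF conjunct2[OF H1]] unfolding bounded_iff by blast
  have "h s y $ j \<le> B" for s y j
  proof -
    have "norm (h s y) \<le> B" using B by auto
    then show ?thesis using abs_ge_self[of "h s y $ j"] component_le_norm_cart[of "h s y" j] by linarith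
  qed
  ultimately show ?thesis by (rule that)
qed

lemma solution_flow_pullback:
  assumes "solution_flow M W A h \<sigma> \<phi>"
  obtains J where
    "\<And>m. - (real m * T) \<le> t \<Longrightarrow> wiener_integral M W (\<lambda>r. mexp ((t - r) *\<^sub>R A) ** \<sigma> r) (- (real m * T)) t (J m)"
    and "AE \<omega> in M. \<forall>m. - (real m * T) \<le> t \<longrightarrow> \<phi> t (- (real m * T)) \<omega> x =
        mexp ((t - - (real m * T)) *\<^sub>R A) *v x
        + integral {- (real m * T)..t} (\<lambda>r. mexp ((t - r) *\<^sub>R A) *v h r (\<phi> r (- (real m * T)) \<omega> x))
        + J m \<omega>"
proof -
  define voc where "voc m I \<omega> \<longleftrightarrow> \<phi> t (- (real m * T)) \<omega> x =
        mexp ((t - - (real m * T)) *\<^sub>R A) *v x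
        + integral {- (real m * T)..t} (\<lambda>r. mexp ((t - r) *\<^sub>R A) *v h r (\<phi> r (- (real m * T)) \<omega> x))
        + I \<omega>" for m I \<omega>
  have flow: "\<And>s. s \<le> t \<Longrightarrow> \<exists>I. wiener_integral M W (\<lambda>r. mexp ((t - r) *\<^sub>R A) ** \<sigma> r) s t I \<and>
      (AE \<omega> in M. \<phi> t s \<omega> x = mexp ((t - s) *\<^sub>R A) *v x
        + integral {s..t} (\<lambda>r. mexp ((t - r) *\<^sub>R A) *v h r (\<phi> r s \<omega> x)) + I \<omega>)"
    using assms unfolding solution_flow_def by blast
  have "\<forall>m. \<exists>I. - (real m * T) \<le> t \<longrightarrow>
      wiener_integral M W (\<lambda>r. mexp ((t - r) *\<^sub>R A) ** \<sigma> r) (- (real m * T)) t I \<and> (AE \<omega> in M. voc m I \<omega>)"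
  proof
    fix m
    show "\<exists>I. - (real m * T) \<le> t \<longrightarrow>
      wiener_integral M W (\<lambda>r. mexp ((t - r) *\<^sub>R A) ** \<sigma> r) (- (real m * T)) t I \<and> (AE \<omega> in M. voc m I \<omega>)"
      using flow[of "- (real m * T)"] unfolding voc_def by (cases "- (real m * T) \<le> t") auto
  qed
  then obtain J where J: "\<forall>m. - (real m * T) \<le> t \<longrightarrow>
      wiener_integral M W (\<lambda>r. mexp ((t - r) *\<^sub>R A) ** \<sigma> r) (- (real m * T)) t (J m) \<and> (AE \<omega> in M. voc m (J m) \<omega>)"
    by (rule choice[THEN exE])
  have "AE \<omega> in M. \<forall>m. - (real m * T) \<le> t \<longrightarrow> voc m (J m) \<omega>"
    unfolding AE_all_countable
  proof
    fix m
    show "AE \<omega> in M. - (real m * T) \<le> t \<longrightarrow> voc m (J m) \<omega>"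
      using J by (cases "- (real m * T) \<le> t") auto
  qed
  moreover have "\<And>m. - (real m * T) \<le> t \<Longrightarrow> wiener_integral M W (\<lambda>r. mexp ((t - r) *\<^sub>R A) ** \<sigma> r) (- (real m * T)) t (J m)"
    using J by blast
  ultimately show ?thesis unfolding voc_def by (rule that[rotated])
qed

theorem lemma3p2:
  fixes M :: "'a measure"
    and W :: "real \<Rightarrow> 'a \<Rightarrow> real^'m"
    and A :: "real^'d^'d"
    and h :: "real \<Rightarrow> real^'d \<Rightarrow> real^'d"
    and \<sigma> :: "real \<Rightarrow> real^'m^'d"
    and \<phi> :: "real \<Rightarrow> real \<Rightarrow> 'a \<Rightarrow> real^'d \<Rightarrow> real^'d"
    and T t :: real
    and x :: "real^'d"
    and Z :: "'a \<Rightarrow> real^'d"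
  assumes BM: "two_sided_BM M W"
    and T_pos: "T > 0"
    and A: "assumption_A A"
    and H1: "assumption_H1 h"
    and h_periodic: "\<And>s y. h (s + T) y = h s y"
    and Sigma: "assumption_Sigma \<sigma>"
    and sigma_periodic: "\<And>s. \<sigma> (s + T) = \<sigma> s"
    and flow: "solution_flow M W A h \<sigma> \<phi>"
    and Z: "wiener_integral_inf M W (\<lambda>s. mexp ((t - s) *\<^sub>R A) ** \<sigma> s) t Z"
  shows "AE \<omega> in M. \<forall>i.
           ereal (K_op A (liminf_h h \<phi> T x) Z t \<omega> $ i) \<le> liminf_phi \<phi> T x t \<omega> i \<and>
           liminf_phi \<phi> T x t \<omega> i \<le> limsup_phi \<phi> T x t \<omega> i \<and>
           limsup_phi \<phi> T x t \<omega> i \<le> ereal (K_op A (limsup_h h \<phi> T x) Z t \<omega> $ i)"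
proof -
  obtain lam where lam: "lam < 0" and Phi: "\<And>\<tau>. 0 \<le> \<tau> \<Longrightarrow> mnorm (mexp (\<tau> *\<^sub>R A)) \<le> exp (lam * \<tau>)"
    and Phi_nonneg: "\<And>\<tau> k l. 0 \<le> \<tau> \<Longrightarrow> 0 \<le> mexp (\<tau> *\<^sub>R A) $ k $ l"
    using assumption_A_imp[OF A] by blast
  obtain B where h: "continuous_on UNIV (\<lambda>(t, y). h t y)" "\<And>s y j. 0 \<le> h s y $ j" "\<And>s y j. h s y $ j \<le> B"
    using assumption_H1_imp[OF H1] by blast
  obtain C where \<sigma>: "\<And>i j. continuous_on UNIV (\<lambda>r. \<sigma> r $ i $ j)" "\<And>r i j. \<bar>\<sigma> r $ i $ j\<bar> \<le> C"
    using Sigma unfolding assumption_Sigma_def by blast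
  obtain J where J: "\<And>m. - (real m * T) \<le> t \<Longrightarrow> wiener_integral M W (\<lambda>r. mexp ((t - r) *\<^sub>R A) ** \<sigma> r) (- (real m * T)) t (J m)"
    and voc: "AE \<omega> in M. \<forall>m. - (real m * T) \<le> t \<longrightarrow> \<phi> t (- (real m * T)) \<omega> x =
        mexp ((t - - (real m * T)) *\<^sub>R A) *v x
        + integral {- (real m * T)..t} (\<lambda>r. mexp ((t - r) *\<^sub>R A) *v h r (\<phi> r (- (real m * T)) \<omega> x)) + J m \<omega>"
    using solution_flow_pullback[OF flow] by blast
  have "AE \<omega> in M. (\<lambda>m. J m \<omega>) \<longlonglongrightarrow> Z \<omega>"
    using AE_pullback_wiener_integral_LIMSEQ[OF BM lam T_pos Phi \<sigma> J Z] .
  with voc AE_space show ?thesis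
  proof eventually_elim
    case (elim \<omega>)
    have \<psi>_cont: "continuous_on {- (real m * T)..} (\<lambda>r. \<phi> r (- (real m * T)) \<omega> x)" for m
      using flow elim(2) unfolding solution_flow_def by blast
    note bounds = pullback_liminf_limsup_bounds[OF lam Phi Phi_nonneg h T_pos \<psi>_cont elim(1,3)]
    show ?case
      using bounds by (simp add: Liminf_le_Limsup K_op_def liminf_phi_def limsup_phi_def liminf_h_def limsup_h_def liminf_vec_def limsup_vec_def)
  qed
qed

end
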